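(* Let $L \in K[D]$ with $\operatorname{ord}(L)=d$ and $\operatorname{Sym}_L=S_1S_2$, where $S_1,S_2$ are homogeneous of degrees $d_1,d_2$, and let $S_0=\gcd(S_1,S_2)$ have degree $d_0$. Let $t$ be an integer with $1\le t\le d-d_0$, and let $F_1\circ F_2$ be a partial factorization of $L$ of order $t$ and type $(S_1)(S_2)$. Then there is at most one, up to lower order terms, extension of $F_1\circ F_2$ to a partial factorization of order $t-1$ of the same type. That is: if $F_1'\circ F_2'$ and $F_1''\circ F_2''$ are partial factorizations of $L$ of order $t-1$ and type $(S_1)(S_2)$, both extensions of $F_1\circ F_2$, then $\operatorname{ord}(F_i'-F_i'')<(t-1)-(d-d_i)$ for $i=1,2$.
   Context: $K$ is a field with commuting derivations $\partial_1,\dots,\partial_n$, and $K[D]=K[D_1,\dots,D_n]$ is the ring of linear differential operators over $K$: the $D_i$ commute with each other and $D_i\circ a=aD_i+\partial_i(a)$ for $a\in K$. Every $L\in K[D]$ is uniquely $\sum_{|J|\le d}a_JD^J$ with $a_J\in K$ and $D^J=D_1^{j_1}\cdots D_n^{j_n}$. The order $\operatorname{ord}(L)$ is the largest $|J|=j_1+\dots+j_n$ with $a_J\ne0$, and $\operatorname{ord}(0)=-\infty$. The symbol $\operatorname{Sym}_L=\sum_{|J|=\operatorname{ord}L}a_JX^J\in K[X_1,\dots,X_n]$. For $t\in\{0,\dots,\operatorname{ord}L\}$, a partial factorization of $L$ of order $t$ and type $(S_1)(S_2)$ is a composition $F_1\circ F_2$ with $\operatorname{Sym}_{F_i}=S_i$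 and $\operatorname{ord}(L-F_1\circ F_2)<t$. If $F_1\circ F_2$ and $F_1'\circ F_2'$ are partial factorizations of orders $t$ and $t'<t$, the latter is an extension of the former if $\operatorname{ord}(F_i-F_i')<t-(d-d_i)$ for $i=1,2$, where $d=\operatorname{ord}L$ and $d_i=\deg S_i$. *)

theory Defs
  imports Complex_Main "HOL-Library.Extended_Real"
begin

text \<open>Multi-indices J = (j_1,...,j_n) are functions nat => nat vanishing outside {0..<n}.
 Operators sum a_J D^J and polynomials sum a_J X^J are both represented by their
 coefficient functions (nat => nat) => 'k with finite support.\<close>

definition mdeg :: "nat \<Rightarrow> (nat \<Rightarrow> nat) \<Rightarrow> nat" where
  "mdeg n J = (\<Sum>i<n. J i)"

definition is_mindex :: "nat \<Rightarrow> (nat \<Rightarrow> nat) \<Rightarrow> bool" where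
  "is_mindex n J \<longleftrightarrow> (\<forall>i\<ge>n. J i = 0)"

definition supp :: "((nat \<Rightarrow> nat) \<Rightarrow> 'k::zero) \<Rightarrow> (nat \<Rightarrow> nat) set" where
  "supp L = {J. L J \<noteq> 0}"

definition is_op :: "nat \<Rightarrow> ((nat \<Rightarrow> nat) \<Rightarrow> 'k::zero) \<Rightarrow> bool" where
  "is_op n L \<longleftrightarrow> finite (supp L) \<and> (\<forall>J\<in>supp L. is_mindex n J)"

definition is_mpoly :: "nat \<Rightarrow> ((nat \<Rightarrow> nat) \<Rightarrow> 'k::zero) \<Rightarrow> bool" where
  "is_mpoly n P \<longleftrightarrow> finite (supp P) \<and> (\<forall>J\<in>supp P. is_mindex n J)"

definition is_derivation :: "('k::field \<Rightarrow> 'k) \<Rightarrow> bool" where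
  "is_derivation \<delta> \<longleftrightarrow> (\<forall>a b. \<delta> (a + b) = \<delta> a + \<delta> b) \<and> (\<forall>a b. \<delta> (a * b) = a * \<delta> b + \<delta> a * b)"

definition commuting_derivations :: "nat \<Rightarrow> (nat \<Rightarrow> 'k::field \<Rightarrow> 'k) \<Rightarrow> bool" where
  "commuting_derivations n \<delta> \<longleftrightarrow> (\<forall>i<n. is_derivation (\<delta> i)) \<and>
     (\<forall>i<n. \<forall>j<n. \<forall>a. \<delta> i (\<delta> j a) = \<delta> j (\<delta> i a))"

text \<open>\<partial>^K = \<partial>_1^{k_1} ... \<partial>_n^{k_n} (indices shifted to start at 0).\<close>
fun dpow :: "(nat \<Rightarrow> 'k \<Rightarrow> 'k) \<Rightarrow> nat \<Rightarrow> (nat \<Rightarrow> nat) \<Rightarrow> 'k \<Rightarrow> 'k" where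
  "dpow \<delta> 0 K a = a"
| "dpow \<delta> (Suc m) K a = (\<delta> m ^^ K m) (dpow \<delta> m K a)"

definition mbinom :: "nat \<Rightarrow> (nat \<Rightarrow> nat) \<Rightarrow> (nat \<Rightarrow> nat) \<Rightarrow> nat" where
  "mbinom n I K = (\<Prod>i<n. I i choose K i)"

text \<open>Composition in K[D]:
  (a D^I) o (b D^J) = sum_{K <= I} binom(I,K) a \<partial>^K(b) D^{I-K+J}.\<close>
definition op_comp :: "(nat \<Rightarrow> 'k::field \<Rightarrow> 'k) \<Rightarrow> nat \<Rightarrow> ((nat \<Rightarrow> nat) \<Rightarrow> 'k)
    \<Rightarrow> ((nat \<Rightarrow> nat) \<Rightarrow> 'k) \<Rightarrow> ((nat \<Rightarrow> nat) \<Rightarrow> 'k)" where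
  "op_comp \<delta> n L M = (\<lambda>P. \<Sum>I\<in>supp L. \<Sum>J\<in>supp M.
      \<Sum>K\<in>{K. is_mindex n K \<and> (\<forall>i<n. K i \<le> I i) \<and> (\<lambda>i. I i - K i + J i) = P}.
         of_nat (mbinom n I K) * L I * dpow \<delta> n K (M J))"

definition op_minus :: "((nat \<Rightarrow> nat) \<Rightarrow> 'k::ab_group_add) \<Rightarrow> ((nat \<Rightarrow> nat) \<Rightarrow> 'k) \<Rightarrow> ((nat \<Rightarrow> nat) \<Rightarrow> 'k)" where
  "op_minus L M = (\<lambda>J. L J - M J)"

definition ord :: "nat \<Rightarrow> ((nat \<Rightarrow> nat) \<Rightarrow> 'k::zero) \<Rightarrow> ereal" where
  "ord n L = (if supp L = {} then -\<infinity> else ereal (real (Max (mdeg n ` supp L))))"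

definition Sym :: "nat \<Rightarrow> ((nat \<Rightarrow> nat) \<Rightarrow> 'k::zero) \<Rightarrow> ((nat \<Rightarrow> nat) \<Rightarrow> 'k)" where
  "Sym n L = (\<lambda>J. if ereal (real (mdeg n J)) = ord n L then L J else 0)"

definition pmult :: "((nat \<Rightarrow> nat) \<Rightarrow> 'k::comm_ring) \<Rightarrow> ((nat \<Rightarrow> nat) \<Rightarrow> 'k) \<Rightarrow> ((nat \<Rightarrow> nat) \<Rightarrow> 'k)" where
  "pmult P Q = (\<lambda>M. \<Sum>I\<in>supp P. \<Sum>J\<in>supp Q. if (\<lambda>i. I i + J i) = M then P I * Q J else 0)"

definition homogeneous :: "nat \<Rightarrow> ((nat \<Rightarrow> nat) \<Rightarrow> 'k::zero) \<Rightarrow> nat \<Rightarrow> bool" where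
  "homogeneous n P d \<longleftrightarrow> (\<forall>J\<in>supp P. mdeg n J = d)"

text \<open>Total degree of a nonzero polynomial.\<close>
definition pdeg :: "nat \<Rightarrow> ((nat \<Rightarrow> nat) \<Rightarrow> 'k::zero) \<Rightarrow> nat" where
  "pdeg n P = Max (mdeg n ` supp P)"

definition pdvd :: "nat \<Rightarrow> ((nat \<Rightarrow> nat) \<Rightarrow> 'k::comm_ring) \<Rightarrow> ((nat \<Rightarrow> nat) \<Rightarrow> 'k) \<Rightarrow> bool" where
  "pdvd n P Q \<longleftrightarrow> (\<exists>R. is_mpoly n R \<and> Q = pmult P R)"

definition is_gcd :: "nat \<Rightarrow> ((nat \<Rightarrow> nat) \<Rightarrow> 'k::comm_ring) \<Rightarrow> ((nat \<Rightarrow> nat) \<Rightarrow> 'k) \<Rightarrow> ((nat \<Rightarrow> nat) \<Rightarrow> 'k) \<Rightarrow> bool" where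
  "is_gcd n G P Q \<longleftrightarrow> is_mpoly n G \<and> pdvd n G P \<and> pdvd n G Q \<and>
     (\<forall>H. is_mpoly n H \<and> pdvd n H P \<and> pdvd n H Q \<longrightarrow> pdvd n H G)"

definition partial_factorization :: "(nat \<Rightarrow> 'k::field \<Rightarrow> 'k) \<Rightarrow> nat \<Rightarrow> ((nat \<Rightarrow> nat) \<Rightarrow> 'k) \<Rightarrow> int
   \<Rightarrow> ((nat \<Rightarrow> nat) \<Rightarrow> 'k) \<Rightarrow> ((nat \<Rightarrow> nat) \<Rightarrow> 'k) \<Rightarrow> ((nat \<Rightarrow> nat) \<Rightarrow> 'k) \<Rightarrow> ((nat \<Rightarrow> nat) \<Rightarrow> 'k) \<Rightarrow> bool" where
  "partial_factorization \<delta> n L t S1 S2 F1 F2 \<longleftrightarrow>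
     0 \<le> t \<and> ereal (real_of_int t) \<le> ord n L \<and>
     is_op n F1 \<and> is_op n F2 \<and> Sym n F1 = S1 \<and> Sym n F2 = S2 \<and>
     ord n (op_minus L (op_comp \<delta> n F1 F2)) < ereal (real_of_int t)"

text \<open>F1' o F2' (order t') is an extension of F1 o F2 (order t), where d = ord L,
  d1 = deg S1, d2 = deg S2.\<close>
definition is_extension :: "nat \<Rightarrow> nat \<Rightarrow> nat \<Rightarrow> nat \<Rightarrow> int \<Rightarrow> ((nat \<Rightarrow> nat) \<Rightarrow> 'k::ab_group_add)
   \<Rightarrow> ((nat \<Rightarrow> nat) \<Rightarrow> 'k) \<Rightarrow> int \<Rightarrow> ((nat \<Rightarrow> nat) \<Rightarrow> 'k) \<Rightarrow> ((nat \<Rightarrow> nat) \<Rightarrow> 'k) \<Rightarrow> bool" where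
  "is_extension n d d1 d2 t F1 F2 t' F1' F2' \<longleftrightarrow> t' < t \<and>
     ord n (op_minus F1 F1') < ereal (real_of_int (t - (int d - int d1))) \<and>
     ord n (op_minus F2 F2') < ereal (real_of_int (t - (int d - int d2)))"

end

theory Submission
  imports Defs "HOL-Library.Poly_Mapping" "HOL-Computational_Algebra.Polynomial"
begin

text \<open>Write B_i = F_i'' - F_i'. Since both factorizations extend F_1 \<circ> F_2, B_i has order below
  t - (d - d_i), so only its homogeneous component b_i of degree e_i = t - 1 - (d - d_i) matters.
  Both F_1' \<circ> F_2' and F_1'' \<circ> F_2'' agree with L in order t - 1, and comparing these parts gives
  b_1 S_2 + S_1 b_2 = 0. With S_0 = gcd(S_1, S_2), the quotients S_1/S_0 and S_2/S_0 are coprime, so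
  S_1/S_0 divides b_1. As deg b_1 = t - 1 - d_2 < d_1 - d_0, this forces b_1 = 0, and then b_2 = 0.

  The coprimality argument needs unique factorisation in K[X_1, ..., X_n]. It is proved by induction
  on the number of variables: by Gauss's lemma and pseudo-division in K[V][X], the irreducible
  elements of K[V \<union> {v}] are prime as soon as those of K[V] are.\<close>

section \<open>Weighted degrees of polynomials\<close>

abbreviation lookup :: "('a \<Rightarrow>\<^sub>0 'b::zero) \<Rightarrow> 'a \<Rightarrow> 'b" where "lookup \<equiv> Poly_Mapping.lookup"
abbreviation keys :: "('a \<Rightarrow>\<^sub>0 'b::zero) \<Rightarrow> 'a set" where "keys \<equiv> Poly_Mapping.keys"
abbreviation single :: "'a \<Rightarrow> 'b \<Rightarrow> 'a \<Rightarrow>\<^sub>0 'b::zero" where "single \<equiv> Poly_Mapping.single"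

text \<open>The polynomial ring K[X_0, X_1, ...]; a monomial is its vector of exponents.\<close>
type_synonym 'k mpoly = "(nat \<Rightarrow>\<^sub>0 nat) \<Rightarrow>\<^sub>0 'k"

definition deg_in :: "nat set \<Rightarrow> (nat \<Rightarrow>\<^sub>0 nat) \<Rightarrow> nat" where
  "deg_in V m = sum (lookup m) (keys m \<inter> V)"

lemma deg_in_add: "deg_in V (a + b) = deg_in V a + deg_in V b"
proof -
  have sum_on_union: "sum (lookup c) ((keys a \<union> keys b) \<inter> V) = deg_in V c" if "keys c \<subseteq> keys a \<union> keys b" for c
    unfolding deg_in_def by (rule sum.mono_neutral_right) (use that in \<open>auto simp: in_keys_iff\<close>)
  have "deg_in V (a + b) = sum (lookup (a + b)) ((keys a \<union> keys b) \<inter> V)"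
    using sum_on_union[of "a + b"] keys_add[of a b] by simp
  also have "\<dots> = sum (lookup a) ((keys a \<union> keys b) \<inter> V) + sum (lookup b) ((keys a \<union> keys b) \<inter> V)"
    by (simp add: lookup_add sum.distrib)
  finally show ?thesis using sum_on_union[of a] sum_on_union[of b] by simp
qed

lemma deg_in_eq_0_iff: "deg_in V m = 0 \<longleftrightarrow> keys m \<inter> V = {}"
  by (auto simp: deg_in_def in_keys_iff)

definition wdegree :: "((nat \<Rightarrow>\<^sub>0 nat) \<Rightarrow> nat) \<Rightarrow> 'k::zero mpoly \<Rightarrow> nat" where
  "wdegree w p = Max (w ` keys p)"

lemma wdegree_ge: "M \<in> keys p \<Longrightarrow> w M \<le> wdegree w p"
  unfolding wdegree_def by (rule Max_ge) auto

lemma wdegree_attained: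
  assumes "p \<noteq> 0" obtains M where "M \<in> keys p" "w M = wdegree w p"
proof -
  have "Max (w ` keys p) \<in> w ` keys p" using assms by (intro Max_in) auto
  thus ?thesis using that unfolding wdegree_def by auto
qed

lemma wdegree_eq_0_iff: "p \<noteq> 0 \<Longrightarrow> wdegree w p = 0 \<longleftrightarrow> (\<forall>M\<in>keys p. w M = 0)"
  using wdegree_ge[of _ p w] wdegree_attained[of p w] by (metis le_zero_eq)

lemma keys_mult_weight:
  assumes "\<And>a b. w (a + b) = w a + w b" and "M \<in> keys (p * q)"
  obtains a b where "a \<in> keys p" "b \<in> keys q" "w M = w a + w b"
  using keys_mult[of p q] assms by blast

definition top_part :: "((nat \<Rightarrow>\<^sub>0 nat) \<Rightarrow> nat) \<Rightarrow> 'k::zero mpoly \<Rightarrow> 'k mpoly" where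
  "top_part w p = Poly_Mapping.mapp (\<lambda>M c. if w M = wdegree w p then c else 0) p"

lemma weight_keys_top_part: "M \<in> keys (top_part w p) \<Longrightarrow> w M = wdegree w p"
  by (auto simp: top_part_def in_keys_iff lookup_mapp when_def split: if_splits)

lemma weight_keys_diff_top_part:
  fixes p :: "'k::ab_group_add mpoly"
  assumes "M \<in> keys (p - top_part w p)" shows "w M < wdegree w p"
proof -
  have "M \<in> keys p" "w M \<noteq> wdegree w p"
    using assms by (auto simp: top_part_def in_keys_iff lookup_mapp lookup_minus when_def split: if_splits)
  thus ?thesis using wdegree_ge[of M p w] by simp
qed

lemma top_part_nonzero:
  assumes "p \<noteq> 0" shows "top_part w p \<noteq> 0"
proof -
  obtain M where "M \<in> keys p" "w M = wdegree w p" using wdegree_attained[OF assms] by metis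
  hence "M \<in> keys (top_part w p)" by (simp add: top_part_def in_keys_iff lookup_mapp)
  thus ?thesis by auto
qed

lemma wdegree_mult:
  fixes p q :: "'k::idom mpoly"
  assumes w_add: "\<And>a b. w (a + b) = w a + w b" and "p \<noteq> 0" "q \<noteq> 0"
  shows "wdegree w (p * q) = wdegree w p + wdegree w q"
proof -
  define m where "m = wdegree w p + wdegree w q"
  have "top_part w p * top_part w q \<noteq> 0" using top_part_nonzero[OF assms(2)] top_part_nonzero[OF assms(3)] by simp
  then obtain M0 where M0: "M0 \<in> keys (top_part w p * top_part w q)"
    by (metis all_not_in_conv keys_eq_empty)
  have wM0: "w M0 = m"
  proof -
    obtain a b where ab: "a \<in> keys (top_part w p)" "b \<in> keys (top_part w q)" "w M0 = w a + w b"
      using keys_mult_weight[OF w_add M0] .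
    thus ?thesis using weight_keys_top_part[OF ab(1)] weight_keys_top_part[OF ab(2)] by (simp add: m_def)
  qed
  \<comment> \<open>the product of the parts of top weight cannot be cancelled by the other products\<close>
  define R where "R = top_part w p * (q - top_part w q) + (p - top_part w p) * q"
  have pq: "p * q = top_part w p * top_part w q + R" by (simp add: R_def algebra_simps)
  have "w M < m" if M: "M \<in> keys R" for M
  proof -
    have "M \<in> keys (top_part w p * (q - top_part w q)) \<or> M \<in> keys ((p - top_part w p) * q)"
      using M keys_add[of "top_part w p * (q - top_part w q)"] unfolding R_def by blast
    thus ?thesis
    proof
      assume "M \<in> keys (top_part w p * (q - top_part w q))"
      then obtain a b where ab: "a \<in> keys (top_part w p)" "b \<in> keys (q - top_part w q)" "w M = w a + w b"
        using keys_mult_weight[OF w_add] by metis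
      thus ?thesis using weight_keys_top_part[OF ab(1)] weight_keys_diff_top_part[OF ab(2)] by (simp add: m_def)
    next
      assume "M \<in> keys ((p - top_part w p) * q)"
      then obtain a b where ab: "a \<in> keys (p - top_part w p)" "b \<in> keys q" "w M = w a + w b"
        using keys_mult_weight[OF w_add] by metis
      thus ?thesis using weight_keys_diff_top_part[OF ab(1)] wdegree_ge[OF ab(2), of w] by (simp add: m_def)
    qed
  qed
  hence "M0 \<notin> keys R" using wM0 by blast
  hence "M0 \<in> keys (p * q)" using M0 by (simp add: pq in_keys_iff lookup_add)
  moreover have "w M \<le> m" if M: "M \<in> keys (p * q)" for M
  proof -
    obtain a b where "a \<in> keys p" "b \<in> keys q" "w M = w a + w b"
      using keys_mult_weight[OF w_add M] .
    thus ?thesis using wdegree_ge[of a p w] wdegree_ge[of b q w] by (simp add: m_def)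
  qed
  ultimately have "Max (w ` keys (p * q)) = m"
    by (intro Max_eqI) (auto simp flip: wM0)
  thus ?thesis by (simp add: wdegree_def m_def)
qed

definition total_degree :: "'k::zero mpoly \<Rightarrow> nat" where
  "total_degree = wdegree (deg_in UNIV)"

lemma total_degree_mult:
  "(p::'k::idom mpoly) \<noteq> 0 \<Longrightarrow> q \<noteq> 0 \<Longrightarrow> total_degree (p * q) = total_degree p + total_degree q"
  unfolding total_degree_def by (rule wdegree_mult) (simp_all add: deg_in_add)

lemma total_degree_eq_0_iff:
  "(p::'k::zero mpoly) \<noteq> 0 \<Longrightarrow> total_degree p = 0 \<longleftrightarrow> p = single 0 (lookup p 0)"
proof
  assume "p \<noteq> 0" "total_degree p = 0"
  hence "\<forall>M\<in>keys p. M = 0" by (simp add: total_degree_def wdegree_eq_0_iff deg_in_eq_0_iff)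
  thus "p = single 0 (lookup p 0)"
    by (intro poly_mapping_eqI) (auto simp: lookup_single when_def in_keys_iff)
next
  assume "p \<noteq> 0" and p: "p = single 0 (lookup p 0)"
  have "keys p \<subseteq> {0}" by (subst p) simp
  hence "\<forall>M\<in>keys p. M = 0" by auto
  thus "total_degree p = 0" using \<open>p \<noteq> 0\<close> by (simp add: total_degree_def wdegree_eq_0_iff deg_in_eq_0_iff)
qed

lemma mpoly_dvd_one_iff: "(p::'k::field mpoly) dvd 1 \<longleftrightarrow> p \<noteq> 0 \<and> total_degree p = 0"
proof
  assume "p dvd 1"
  then obtain q where pq: "1 = p * q" by (rule dvdE)
  hence "p \<noteq> 0" "q \<noteq> 0" by auto
  moreover have "total_degree (1::'k mpoly) = 0" by (simp add: total_degree_eq_0_iff)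
  ultimately show "p \<noteq> 0 \<and> total_degree p = 0" using total_degree_mult[of p q] pq by simp
next
  assume "p \<noteq> 0 \<and> total_degree p = 0"
  hence p: "p = single 0 (lookup p 0)" and c: "lookup p 0 \<noteq> 0"
    using total_degree_eq_0_iff by (metis single_zero)+
  have "p * single 0 (inverse (lookup p 0)) = 1"
    by (subst p) (simp add: mult_single c)
  thus "p dvd 1" by (rule dvdI[OF sym])
qed

lemma exists_irreducible_factor:
  fixes x :: "'k::field mpoly"
  assumes "x \<noteq> 0" "\<not> x dvd 1" shows "\<exists>p. irreducible p \<and> p dvd x"
  using assms
proof (induction "total_degree x" arbitrary: x rule: less_induct)
  case less
  show ?case
  proof (cases "irreducible x")
    case False
    then obtain a b where ab: "x = a * b" "\<not> a dvd 1" "\<not> b dvd 1"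
      using less.prems unfolding irreducible_def by auto
    hence "a \<noteq> 0" "b \<noteq> 0" using less.prems by auto
    hence "total_degree a < total_degree x"
      using ab total_degree_mult[of a b] by (simp add: mpoly_dvd_one_iff)
    then obtain p where "irreducible p" "p dvd a" using less.hyps \<open>a \<noteq> 0\<close> ab(2) by blast
    thus ?thesis using ab(1) by auto
  qed (use less.prems in auto)
qed

section \<open>Polynomials in a given set of variables\<close>

definition vars :: "'k::zero mpoly \<Rightarrow> nat set" where
  "vars p = (\<Union>M\<in>keys p. keys M)"

definition mpolys :: "nat set \<Rightarrow> 'k::zero mpoly set" where
  "mpolys V = {p. vars p \<subseteq> V}"

lemma finite_vars: "finite (vars p)"
  by (simp add: vars_def)

lemma mpolys_vars: "p \<in> mpolys (vars p)"
  by (simp add: mpolys_def)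

lemma mpolys_mono: "p \<in> mpolys V \<Longrightarrow> V \<subseteq> W \<Longrightarrow> p \<in> mpolys W"
  by (auto simp: mpolys_def)

lemma mpolys_const: "single 0 c \<in> mpolys V"
  by (simp add: mpolys_def vars_def)

lemma mpolys_zero: "0 \<in> mpolys V"
  by (simp add: mpolys_def vars_def)

lemma mpolys_one: "1 \<in> mpolys V"
  by (simp add: mpolys_def vars_def)

lemma mpolys_add: "p \<in> mpolys V \<Longrightarrow> q \<in> mpolys V \<Longrightarrow> p + q \<in> mpolys V"
  using keys_add[of p q] unfolding mpolys_def vars_def by blast

lemma mpolys_diff: "p \<in> mpolys V \<Longrightarrow> q \<in> mpolys V \<Longrightarrow> p - q \<in> mpolys V"
  for p q :: "'k::ab_group_add mpoly"
  using keys_diff[of p q] unfolding mpolys_def vars_def by blast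

lemma mpolys_mult:
  fixes p q :: "'k::comm_ring_1 mpoly"
  assumes "p \<in> mpolys V" "q \<in> mpolys V" shows "p * q \<in> mpolys V"
proof -
  have "keys M \<subseteq> V" if M: "M \<in> keys (p * q)" for M
  proof -
    obtain a b where "a \<in> keys p" "b \<in> keys q" "M = a + b" using keys_mult[of p q] M by blast
    thus ?thesis using keys_add[of a b] assms unfolding mpolys_def vars_def by blast
  qed
  thus ?thesis unfolding mpolys_def vars_def by blast
qed

lemma mpolys_sum: "(\<And>x. x \<in> A \<Longrightarrow> f x \<in> mpolys V) \<Longrightarrow> sum f A \<in> mpolys V"
  by (induction A rule: infinite_finite_induct) (auto intro: mpolys_add mpolys_zero)

lemma mpolys_power: "p \<in> mpolys V \<Longrightarrow> p ^ k \<in> mpolys V"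
  for p :: "'k::comm_ring_1 mpoly"
  by (induction k) (auto intro: mpolys_mult mpolys_one)

text \<open>The degree in the variables outside V is additive and vanishes on q.\<close>
lemma mpolys_dvd:
  fixes p q :: "'k::idom mpoly"
  assumes "p dvd q" "q \<noteq> 0" "q \<in> mpolys V"
  shows "p \<in> mpolys V"
proof -
  obtain r where q: "q = p * r" using assms(1) by (rule dvdE)
  hence "p \<noteq> 0" "r \<noteq> 0" using assms(2) by auto
  have "wdegree (deg_in (- V)) q = 0"
    using assms(2,3) by (auto simp: wdegree_eq_0_iff deg_in_eq_0_iff mpolys_def vars_def)
  hence "wdegree (deg_in (- V)) p = 0"
    using wdegree_mult[where w = "deg_in (- V)", OF deg_in_add \<open>p \<noteq> 0\<close> \<open>r \<noteq> 0\<close>] q by simp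
  thus ?thesis using \<open>p \<noteq> 0\<close> by (auto simp: wdegree_eq_0_iff deg_in_eq_0_iff mpolys_def vars_def)
qed

lemma unit_inverse_mpolysE:
  fixes c :: "'k::idom mpoly"
  assumes "c dvd 1" obtains c' where "c' \<in> mpolys V" "c * c' = 1"
proof -
  obtain c' where c': "1 = c * c'" using assms by (rule dvdE)
  hence "c' dvd 1" using dvd_triv_right[of c' c] by simp
  hence "c' \<in> mpolys V" by (rule mpolys_dvd) (simp_all add: mpolys_one)
  thus ?thesis using that c' by simp
qed

definition polys_over :: "nat set \<Rightarrow> 'k::zero mpoly poly set" where
  "polys_over V = {X. \<forall>k. coeff X k \<in> mpolys V}"

lemma polys_over_add: "X \<in> polys_over V \<Longrightarrow> Y \<in> polys_over V \<Longrightarrow> X + Y \<in> polys_over V"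
  by (simp add: polys_over_def mpolys_add)

lemma polys_over_diff: "X \<in> polys_over V \<Longrightarrow> Y \<in> polys_over V \<Longrightarrow> X - Y \<in> polys_over V"
  for X Y :: "'k::ab_group_add mpoly poly"
  by (simp add: polys_over_def mpolys_diff)

lemma polys_over_zero: "0 \<in> polys_over V"
  by (simp add: polys_over_def mpolys_zero)

lemma polys_over_const: "c \<in> mpolys V \<Longrightarrow> [:c:] \<in> polys_over V"
  by (simp add: polys_over_def coeff_pCons mpolys_zero split: nat.splits)

lemma polys_over_one: "1 \<in> polys_over V"
  using polys_over_const[OF mpolys_one] by (simp add: one_pCons)

lemma polys_over_smult: "c \<in> mpolys V \<Longrightarrow> X \<in> polys_over V \<Longrightarrow> smult c X \<in> polys_over V"
  for X :: "'k::comm_ring_1 mpoly poly"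
  by (simp add: polys_over_def mpolys_mult)

lemma polys_over_monom: "c \<in> mpolys V \<Longrightarrow> monom c j \<in> polys_over V"
  by (simp add: polys_over_def mpolys_zero)

lemma polys_over_mult: "X \<in> polys_over V \<Longrightarrow> Y \<in> polys_over V \<Longrightarrow> X * Y \<in> polys_over V"
  for X Y :: "'k::comm_ring_1 mpoly poly"
  by (auto simp: polys_over_def coeff_mult intro!: mpolys_sum mpolys_mult)

lemma polys_over_sum: "(\<And>x. x \<in> A \<Longrightarrow> f x \<in> polys_over V) \<Longrightarrow> sum f A \<in> polys_over V"
  by (auto simp: polys_over_def coeff_sum intro!: mpolys_sum)

lemma lead_coeff_in_mpolys: "X \<in> polys_over V \<Longrightarrow> lead_coeff X \<in> mpolys V"
  by (simp add: polys_over_def)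

lemma polys_over_const_dvdE:
  fixes A :: "'k::field mpoly poly"
  assumes "p \<in> mpolys V" "p \<noteq> 0" "A \<in> polys_over V" "[:p:] dvd A"
  obtains A' where "A' \<in> polys_over V" "A = smult p A'"
proof -
  obtain A' where A': "A = smult p A'" using assms(4) by (auto elim: dvdE)
  have "coeff A' k \<in> mpolys V" for k
  proof (cases "coeff A k = 0")
    case True
    thus ?thesis using A' assms(2) by (simp add: mpolys_zero)
  next
    case False
    thus ?thesis using A' assms(3) mpolys_dvd[of "coeff A' k" "coeff A k" V]
      by (simp add: polys_over_def)
  qed
  thus ?thesis using that[of A'] A' by (simp add: polys_over_def)
qed

section \<open>Adjoining a variable\<close>

definition var :: "nat \<Rightarrow> 'k::comm_ring_1 mpoly" where
  "var v = single (single v 1) 1"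

lemma var_power: "var v ^ k = (single (single v k) 1 :: 'k::comm_ring_1 mpoly)"
  by (induction k) (simp_all add: var_def mult_single single_add[symmetric])

lemma var_nonzero: "var v \<noteq> (0 :: 'k::comm_ring_1 mpoly)"
  by (metis var_def lookup_single_eq one_neq_zero lookup_zero)

lemma lookup_keys_mult_var_power:
  fixes c :: "'k::comm_ring_1 mpoly"
  assumes "c \<in> mpolys V" "v \<notin> V" "M \<in> keys (c * var v ^ k)"
  shows "lookup M v = k"
proof -
  obtain a b where ab: "a \<in> keys c" "b \<in> keys (var v ^ k :: 'k mpoly)" "M = a + b"
    using keys_mult[of c "var v ^ k"] assms(3) by blast
  have "b = single v k" using ab(2) by (simp add: var_power split: if_splits)
  moreover have "v \<notin> keys a" using assms(1,2) ab(1) by (auto simp: mpolys_def vars_def)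
  ultimately show ?thesis using ab(3) by (simp add: lookup_add in_keys_iff)
qed

lemma poly_var_eq_0_iff:
  fixes X :: "'k::idom mpoly poly"
  assumes "v \<notin> V" "X \<in> polys_over V"
  shows "poly X (var v) = 0 \<longleftrightarrow> X = 0"
proof
  assume X0: "poly X (var v) = 0"
  show "X = 0"
  proof (rule ccontr)
    assume "X \<noteq> 0"
    define d where "d = degree X"
    define top where "top = coeff X d * var v ^ d"
    have "top \<noteq> 0" using \<open>X \<noteq> 0\<close> by (simp add: top_def d_def var_nonzero)
    then obtain M where M: "M \<in> keys top" by (metis all_not_in_conv keys_eq_empty)
    have Mv: "lookup M v = d"
      using lookup_keys_mult_var_power[of "coeff X d" V v M d] assms M by (simp add: polys_over_def top_def)
    define low where "low = (\<Sum>i<d. coeff X i * var v ^ i)"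
    have "poly X (var v) = low + top"
      unfolding poly_altdef low_def top_def d_def by (simp add: lessThan_Suc_atMost[symmetric])
    moreover have "M \<notin> keys low"
    proof
      assume "M \<in> keys low"
      then obtain i where "i < d" "M \<in> keys (coeff X i * var v ^ i)"
        using keys_sum[of "\<lambda>i. coeff X i * var v ^ i" "{..<d}"] unfolding low_def by blast
      thus False using lookup_keys_mult_var_power assms Mv by (force simp: polys_over_def)
    qed
    ultimately have "lookup (poly X (var v)) M \<noteq> 0" using M by (simp add: lookup_add in_keys_iff)
    thus False using X0 by simp
  qed
qed simp

lemma poly_var_inj:
  fixes X Y :: "'k::idom mpoly poly"
  assumes "v \<notin> V" "X \<in> polys_over V" "Y \<in> polys_over V" "poly X (var v) = poly Y (var v)"
  shows "X = Y"
  using poly_var_eq_0_iff[of v V "X - Y"] assms by (simp add: polys_over_diff)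

lemma poly_var_surj:
  fixes p :: "'k::comm_ring_1 mpoly"
  assumes "p \<in> mpolys (insert v V)" obtains X where "X \<in> polys_over V" "poly X (var v) = p"
proof -
  \<comment> \<open>sort the monomials of p by their exponent at v\<close>
  define drop_v where "drop_v M = Poly_Mapping.update v 0 M" for M :: "nat \<Rightarrow>\<^sub>0 nat"
  define X where "X = (\<Sum>M\<in>keys p. monom (single (drop_v M) (lookup p M)) (lookup M v))"
  have "single (drop_v M) c \<in> mpolys V" if "M \<in> keys p" for M and c :: 'k
  proof -
    have "keys (drop_v M) \<subseteq> keys M - {v}"
      by (auto simp: drop_v_def in_keys_iff lookup_update split: if_splits)
    moreover have "keys M \<subseteq> insert v V" using assms that by (auto simp: mpolys_def vars_def)
    ultimately show ?thesis by (auto simp: mpolys_def vars_def)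
  qed
  hence "X \<in> polys_over V" unfolding X_def by (intro polys_over_sum polys_over_monom)
  moreover have "poly X (var v) = p"
  proof -
    have "M = drop_v M + single v (lookup M v)" for M
      by (intro poly_mapping_eqI) (simp add: drop_v_def lookup_add lookup_update lookup_single when_def)
    hence "poly (monom (single (drop_v M) (lookup p M)) (lookup M v)) (var v) = single M (lookup p M)" for M
      by (simp add: poly_monom var_power mult_single)
    hence "poly X (var v) = (\<Sum>M\<in>keys p. single M (lookup p M))"
      unfolding X_def by (simp add: poly_sum)
    also have "\<dots> = p"
      by (intro poly_mapping_eqI)
         (simp add: lookup_sum lookup_single when_def in_keys_iff sum.delta' cong: if_cong)
    finally show ?thesis .
  qed
  ultimately show ?thesis using that by blast
qed

lemma poly_var_dvd_one_imp_degree_0: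
  fixes X :: "'k::field mpoly poly"
  assumes "v \<notin> V" "X \<in> polys_over V" "poly X (var v) dvd 1" shows "degree X = 0"
proof -
  define u where "u = poly X (var v)"
  have "u = single 0 (lookup u 0)"
    using assms(3) total_degree_eq_0_iff mpoly_dvd_one_iff unfolding u_def by blast
  hence "[:u:] \<in> polys_over V" by (metis polys_over_const mpolys_const)
  moreover have "poly X (var v) = poly [:u:] (var v)" by (simp add: u_def)
  ultimately have "X = [:u:]" using poly_var_inj assms(1,2) by blast
  thus ?thesis by simp
qed

section \<open>Unique factorisation\<close>

lemma pseudo_division_polys_over:
  fixes F P :: "'k::field mpoly poly"
  assumes P: "P \<in> polys_over V" "P \<noteq> 0" and F: "F \<in> polys_over V"
  shows "\<exists>k q r. q \<in> polys_over V \<and> r \<in> polys_over V \<and>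
    smult (lead_coeff P ^ k) F = q * P + r \<and> (r = 0 \<or> degree r < degree P)"
  using F
proof (induction "degree F" arbitrary: F rule: less_induct)
  case less
  show ?case
  proof (cases "F = 0 \<or> degree F < degree P")
    case True
    thus ?thesis using less.prems polys_over_zero
      by (intro exI[of _ 0] exI[of _ 0] exI[of _ F]) auto
  next
    case False
    hence "F \<noteq> 0" and le: "degree P \<le> degree F" by auto
    \<comment> \<open>one step of long division cancels the leading term of F\<close>
    define m where "m = degree F - degree P"
    define F1 where "F1 = smult (lead_coeff P) F - monom (lead_coeff F) m * P"
    have lc: "lead_coeff P \<in> mpolys V" "lead_coeff F \<in> mpolys V"
      using P(1) less.prems by (simp_all add: lead_coeff_in_mpolys)
    have F1: "F1 \<in> polys_over V" unfolding F1_def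
      by (intro polys_over_diff polys_over_smult polys_over_mult polys_over_monom lc less.prems P(1))
    have "degree (monom (lead_coeff F) m * P) \<le> degree F"
      using degree_mult_le[of "monom (lead_coeff F) m" P] degree_monom_le[of "lead_coeff F" m] le m_def
      by linarith
    hence "degree F1 \<le> degree F" unfolding F1_def
      by (intro degree_diff_le) (auto intro: order.trans[OF degree_smult_le])
    moreover have "coeff F1 (degree F) = 0"
      using le by (simp add: F1_def coeff_monom_mult m_def)
    ultimately have F1_lt: "F1 = 0 \<or> degree F1 < degree F"
      by (metis le_neq_implies_less leading_coeff_0_iff)
    have eq: "smult (lead_coeff P) F = F1 + monom (lead_coeff F) m * P" by (simp add: F1_def)
    show ?thesis
    proof (cases "F1 = 0")
      case True
      thus ?thesis using eq lc polys_over_zero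
        by (intro exI[of _ 1] exI[of _ "monom (lead_coeff F) m"] exI[of _ 0]) (simp add: polys_over_monom)
    next
      case False
      then obtain k q r where qr: "q \<in> polys_over V" "r \<in> polys_over V"
          "smult (lead_coeff P ^ k) F1 = q * P + r" "r = 0 \<or> degree r < degree P"
        using less.hyps F1 F1_lt by blast
      define q' where "q' = q + smult (lead_coeff P ^ k) (monom (lead_coeff F) m)"
      have "smult (lead_coeff P ^ Suc k) F = smult (lead_coeff P ^ k) (smult (lead_coeff P) F)"
        by (simp only: smult_smult power_Suc2)
      also have "\<dots> = q' * P + r"
        using qr(3) by (simp add: eq q'_def smult_add_right distrib_right)
      finally show ?thesis using qr lc
        by (intro exI[of _ "Suc k"] exI[of _ q'] exI[of _ r])
           (simp add: q'_def polys_over_add polys_over_smult polys_over_monom mpolys_power)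
    qed
  qed
qed

text \<open>The pseudo-remainder is again a combination of F and G, of smaller degree than P.\<close>
lemma min_degree_combination_pseudo_divides:
  fixes F G P A :: "'k::field mpoly poly"
  assumes FG: "F \<in> polys_over V" "G \<in> polys_over V"
    and P: "P = u * F + w * G" "u \<in> polys_over V" "w \<in> polys_over V" "P \<noteq> 0"
    and min: "\<And>x y. x \<in> polys_over V \<Longrightarrow> y \<in> polys_over V \<Longrightarrow> x * F + y * G \<noteq> 0 \<Longrightarrow>
      degree P \<le> degree (x * F + y * G)"
    and A: "A = x * F + y * G" "x \<in> polys_over V" "y \<in> polys_over V"
  obtains k q where "q \<in> polys_over V" "smult (lead_coeff P ^ k) A = q * P"
proof -
  have PV: "P \<in> polys_over V" using P FG by (simp add: polys_over_add polys_over_mult)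
  hence AV: "A \<in> polys_over V" using A FG by (simp add: polys_over_add polys_over_mult)
  obtain k q r where qr: "q \<in> polys_over V" "smult (lead_coeff P ^ k) A = q * P + r"
      "r = 0 \<or> degree r < degree P"
    using pseudo_division_polys_over[OF PV P(4) AV] by blast
  define a where "a = [:lead_coeff P ^ k:]"
  have aV: "a \<in> polys_over V"
    unfolding a_def by (intro polys_over_const mpolys_power lead_coeff_in_mpolys PV)
  have "r = a * A - q * P" using qr(2) by (simp add: a_def)
  also have "\<dots> = (a * x - q * u) * F + (a * y - q * w) * G"
    unfolding A(1) P(1) by (simp add: algebra_simps)
  finally have "r = (a * x - q * u) * F + (a * y - q * w) * G" .
  moreover have "a * x - q * u \<in> polys_over V" "a * y - q * w \<in> polys_over V"
    using aV A P qr(1) by (simp_all add: polys_over_diff polys_over_mult)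
  ultimately have "r = 0" using min qr(3) by (metis not_le)
  thus ?thesis using that qr by simp
qed

definition primitive :: "nat set \<Rightarrow> 'k::comm_ring_1 mpoly poly \<Rightarrow> bool" where
  "primitive V F \<longleftrightarrow> (\<forall>c\<in>mpolys V. (\<forall>k. c dvd coeff F k) \<longrightarrow> c dvd 1)"

lemma irreducible_imp_primitive:
  fixes F :: "'k::field mpoly poly"
  assumes "v \<notin> V" "F \<in> polys_over V" "irreducible (poly F (var v))" "degree F \<noteq> 0"
  shows "primitive V F"
  unfolding primitive_def
proof (intro ballI impI)
  fix c assume c: "c \<in> mpolys V" and dvd: "\<forall>k. c dvd coeff F k"
  have "F \<noteq> 0" using assms(4) by auto
  hence "c \<noteq> 0" using dvd by (metis dvd_0_left_iff leading_coeff_0_iff)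
  moreover have "[:c:] dvd F" using dvd by (simp add: const_poly_dvd_iff)
  ultimately obtain F' where F': "F' \<in> polys_over V" "F = smult c F'"
    using polys_over_const_dvdE c assms(2) by metis
  hence "poly F (var v) = c * poly F' (var v)" by simp
  hence "c dvd 1 \<or> poly F' (var v) dvd 1" using assms(3) by (simp add: irreducibleD)
  moreover have "\<not> poly F' (var v) dvd 1"
    using poly_var_dvd_one_imp_degree_0[OF assms(1) F'(1)] F'(2) assms(4)
    by (metis degree_smult_le le_zero_eq)
  ultimately show "c dvd 1" by blast
qed

context
  fixes V :: "nat set"
  assumes irreducible_prime: "\<And>f g h :: 'k::field mpoly. f \<in> mpolys V \<Longrightarrow> g \<in> mpolys V \<Longrightarrow>
    h \<in> mpolys V \<Longrightarrow> irreducible f \<Longrightarrow> f dvd g * h \<Longrightarrow> f dvd g \<or> f dvd h"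
begin

text \<open>Gauss's lemma: compare the coefficients of A B at the first indices where p fails to divide
  those of A and of B.\<close>
lemma const_irreducible_dvd_mult:
  fixes A B :: "'k mpoly poly"
  assumes p: "p \<in> mpolys V" "irreducible p" and AB: "A \<in> polys_over V" "B \<in> polys_over V"
    and dvd: "[:p:] dvd A * B"
  shows "[:p:] dvd A \<or> [:p:] dvd B"
proof (rule ccontr)
  assume "\<not> ?thesis"
  hence ex: "\<exists>i. \<not> p dvd coeff A i" "\<exists>j. \<not> p dvd coeff B j" by (simp_all add: const_poly_dvd_iff)
  define i where "i = (LEAST i. \<not> p dvd coeff A i)"
  define j where "j = (LEAST j. \<not> p dvd coeff B j)"
  have ni: "\<not> p dvd coeff A i" unfolding i_def using ex(1) by (rule LeastI_ex)
  have nj: "\<not> p dvd coeff B j" unfolding j_def using ex(2) by (rule LeastI_ex)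
  have below_i: "p dvd coeff A k" if "k < i" for k using that not_less_Least unfolding i_def by blast
  have below_j: "p dvd coeff B k" if "k < j" for k using that not_less_Least unfolding j_def by blast
  have "coeff (A * B) (i + j) = coeff A i * coeff B j + (\<Sum>k\<in>{..i + j} - {i}. coeff A k * coeff B (i + j - k))"
    unfolding coeff_mult by (subst sum.remove[of _ i]) auto
  moreover have "p dvd coeff (A * B) (i + j)" using dvd by (simp add: const_poly_dvd_iff)
  moreover have "p dvd (\<Sum>k\<in>{..i + j} - {i}. coeff A k * coeff B (i + j - k))"
  proof (rule dvd_sum)
    fix k assume "k \<in> {..i + j} - {i}"
    hence "k < i \<or> i + j - k < j" by auto
    thus "p dvd coeff A k * coeff B (i + j - k)" using below_i below_j by auto
  qed
  ultimately have "p dvd coeff A i * coeff B j" by (simp add: dvd_add_left_iff)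
  hence "p dvd coeff A i \<or> p dvd coeff B j"
    using irreducible_prime[OF p(1) _ _ p(2)] AB by (simp add: polys_over_def)
  thus False using ni nj by blast
qed

lemma smult_irreducible_eq_mult_cases:
  fixes A B W :: "'k mpoly poly"
  assumes p: "p \<in> mpolys V" "irreducible p" and AB: "A \<in> polys_over V" "B \<in> polys_over V"
    and eq: "smult p W = A * B"
  obtains A1 where "A1 \<in> polys_over V" "A = smult p A1" "W = A1 * B"
    | B1 where "B1 \<in> polys_over V" "B = smult p B1" "W = A * B1"
proof -
  have "p \<noteq> 0" using p(2) by auto
  have "[:p:] dvd A * B" using eq[symmetric] by (simp add: const_poly_dvd_iff)
  hence "[:p:] dvd A \<or> [:p:] dvd B" using const_irreducible_dvd_mult[OF p AB] by blast
  thus ?thesis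
  proof
    assume "[:p:] dvd A"
    then obtain A1 where A1: "A1 \<in> polys_over V" "A = smult p A1"
      by (rule polys_over_const_dvdE[OF p(1) \<open>p \<noteq> 0\<close> AB(1)])
    have "smult p (A1 * B) = smult p W" using eq by (simp only: A1(2) mult_smult_left)
    hence "W = A1 * B" by (rule smult_cancel[OF \<open>p \<noteq> 0\<close>, symmetric])
    thus ?thesis by (rule that(1)[OF A1])
  next
    assume "[:p:] dvd B"
    then obtain B1 where B1: "B1 \<in> polys_over V" "B = smult p B1"
      by (rule polys_over_const_dvdE[OF p(1) \<open>p \<noteq> 0\<close> AB(2)])
    have "smult p (A * B1) = smult p W" using eq by (simp only: B1(2) mult_smult_right)
    hence "W = A * B1" by (rule smult_cancel[OF \<open>p \<noteq> 0\<close>, symmetric])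
    thus ?thesis by (rule that(2)[OF B1])
  qed
qed

text \<open>Peel the irreducible factors off a, one at a time.\<close>
lemma smult_eq_mult_split:
  fixes A B W :: "'k mpoly poly"
  assumes "a \<in> mpolys V" "a \<noteq> 0" "A \<in> polys_over V" "B \<in> polys_over V" "smult a W = A * B"
  shows "\<exists>c1 c2 A' B'. c1 \<in> mpolys V \<and> c2 \<in> mpolys V \<and> A' \<in> polys_over V \<and> B' \<in> polys_over V \<and>
    A = smult c1 A' \<and> B = smult c2 B' \<and> W = A' * B'"
  using assms
proof (induction "total_degree a" arbitrary: a A B W rule: less_induct)
  case less
  show ?case
  proof (cases "a dvd 1")
    case True
    obtain c' where c': "c' \<in> mpolys V" "a * c' = 1" using unit_inverse_mpolysE[OF True] by blast
    have "A = smult a (smult c' A)" using c'(2) by simp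
    moreover have "W = smult c' A * B"
    proof -
      have "W = smult (c' * a) W" using c'(2) by (simp add: mult.commute)
      also have "\<dots> = smult c' (A * B)" using less.prems(5) by (simp flip: smult_smult)
      finally show ?thesis by simp
    qed
    ultimately show ?thesis using less.prems c' mpolys_one
      by (intro exI[of _ a] exI[of _ 1] exI[of _ "smult c' A"] exI[of _ B]) (simp add: polys_over_smult)
  next
    case False
    obtain p where p: "irreducible p" "p dvd a" using exists_irreducible_factor less.prems(2) False by blast
    obtain a' where a': "a = p * a'" using p(2) by (rule dvdE)
    have pV: "p \<in> mpolys V" using mpolys_dvd[OF p(2) less.prems(2,1)] .
    have a'V: "a' \<in> mpolys V" using mpolys_dvd[OF _ less.prems(2,1), of a'] a' by simp
    have "p \<noteq> 0" "a' \<noteq> 0" using a' less.prems(2) by auto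
    moreover have "total_degree p \<noteq> 0"
      using irreducible_not_unit[OF p(1)] \<open>p \<noteq> 0\<close> by (simp add: mpoly_dvd_one_iff)
    ultimately have lt: "total_degree a' < total_degree a" using total_degree_mult[of p a'] a' by simp
    note IH = less.hyps[OF lt a'V \<open>a' \<noteq> 0\<close>]
    have "smult p (smult a' W) = A * B" using less.prems(5) a' by simp
    thus ?thesis
    proof (rule smult_irreducible_eq_mult_cases[OF pV p(1) less.prems(3,4)])
      fix A1 assume A1: "A1 \<in> polys_over V" "A = smult p A1" "smult a' W = A1 * B"
      then obtain c1 c2 A' B' where "c1 \<in> mpolys V" "c2 \<in> mpolys V" "A' \<in> polys_over V"
          "B' \<in> polys_over V" "A1 = smult c1 A'" "B = smult c2 B'" "W = A' * B'"
        using IH[OF A1(1) less.prems(4)] by blast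
      thus ?thesis using A1(2) pV
        by (intro exI[of _ "p * c1"] exI[of _ c2] exI[of _ A'] exI[of _ B']) (simp add: mpolys_mult)
    next
      fix B1 assume B1: "B1 \<in> polys_over V" "B = smult p B1" "smult a' W = A * B1"
      then obtain c1 c2 A' B' where "c1 \<in> mpolys V" "c2 \<in> mpolys V" "A' \<in> polys_over V"
          "B' \<in> polys_over V" "A = smult c1 A'" "B1 = smult c2 B'" "W = A' * B'"
        using IH[OF less.prems(3) B1(1)] by blast
      thus ?thesis using B1(2) pV
        by (intro exI[of _ c1] exI[of _ "p * c2"] exI[of _ A'] exI[of _ B']) (simp add: mpolys_mult)
    qed
  qed
qed

lemma primitive_dvd_smult:
  fixes F X Q :: "'k mpoly poly"
  assumes F: "F \<in> polys_over V" "primitive V F" and b: "b \<in> mpolys V" "b \<noteq> 0"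
    and "Q \<in> polys_over V" "smult b X = F * Q"
  obtains Q' where "Q' \<in> polys_over V" "X = F * Q'"
proof -
  obtain c1 c2 F' Q' where s: "c1 \<in> mpolys V" "c2 \<in> mpolys V" "F' \<in> polys_over V" "Q' \<in> polys_over V"
      "F = smult c1 F'" "Q = smult c2 Q'" "X = F' * Q'"
    using smult_eq_mult_split[OF b F(1) assms(5,6)] by blast
  have "c1 dvd 1" using F(2) s(1,5) unfolding primitive_def by simp
  then obtain c' where c': "c' \<in> mpolys V" "c1 * c' = 1" by (rule unit_inverse_mpolysE)
  have "F' = smult c' F" using s(5) c'(2) by (simp add: mult.commute)
  hence "X = F * smult c' Q'" using s(7) by simp
  thus ?thesis using that polys_over_smult[OF c'(1) s(4)] by blast
qed

lemma smult_eq_mult_irreducible_associate: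
  fixes F q P :: "'k mpoly poly"
  assumes v: "v \<notin> V" and polys: "F \<in> polys_over V" "q \<in> polys_over V" "P \<in> polys_over V"
    and a: "a \<in> mpolys V" "a \<noteq> 0" and eq: "smult a F = q * P"
    and irr: "irreducible (poly F (var v))" and deg: "degree P \<noteq> 0"
  obtains c where "c \<in> mpolys V" "P = smult c F"
proof -
  obtain c1 c2 q' P' where sp: "c1 \<in> mpolys V" "c2 \<in> mpolys V" "q' \<in> polys_over V" "P' \<in> polys_over V"
      "q = smult c1 q'" "P = smult c2 P'" "F = q' * P'"
    using smult_eq_mult_split[OF a polys(2,3) eq] by blast
  have "poly F (var v) = poly q' (var v) * poly P' (var v)" using sp(7) by simp
  hence "poly q' (var v) dvd 1 \<or> poly P' (var v) dvd 1" using irr by (simp add: irreducibleD)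
  moreover have "\<not> poly P' (var v) dvd 1"
    using poly_var_dvd_one_imp_degree_0[OF v sp(4)] sp(6) deg by (metis degree_smult_le le_zero_eq)
  ultimately have unit: "poly q' (var v) dvd 1" by blast
  hence "degree q' = 0" using poly_var_dvd_one_imp_degree_0[OF v sp(3)] by blast
  then obtain e where q': "q' = [:e:]" by (metis degree_0_id)
  hence "e dvd 1" using unit by simp
  then obtain e' where e': "e' \<in> mpolys V" "e * e' = 1" by (rule unit_inverse_mpolysE)
  have "P' = smult e' F" using sp(7) q' e'(2) by (simp add: mult.commute)
  hence "P = smult (c2 * e') F" using sp(6) by simp
  thus ?thesis using that mpolys_mult[OF sp(2) e'(1)] by blast
qed

text \<open>A nonzero combination P of F and G of least degree pseudo-divides F and G. If P had positive
  degree, it would thus be an associate of F dividing G.\<close>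
lemma exists_const_combination:
  fixes F G :: "'k mpoly poly"
  assumes v: "v \<notin> V" and F: "F \<in> polys_over V" "primitive V F" "irreducible (poly F (var v))"
    and G: "G \<in> polys_over V" "\<not> poly F (var v) dvd poly G (var v)"
  obtains c u w where "c \<in> mpolys V" "c \<noteq> 0" "u \<in> polys_over V" "w \<in> polys_over V"
    "[:c:] = u * F + w * G"
proof -
  define S where "S = {(x, y). x \<in> polys_over V \<and> y \<in> polys_over V \<and> x * F + y * G \<noteq> 0}"
  define deg where "deg = (\<lambda>(x, y). degree (x * F + y * G))"
  have "(0, 1) \<in> S" using G(2) by (auto simp: S_def polys_over_zero polys_over_one)
  then obtain z where z: "z \<in> S" and min: "\<And>z'. z' \<in> S \<Longrightarrow> deg z \<le> deg z'"
    using ex_has_least_nat[of "\<lambda>z. z \<in> S" "(0, 1)" deg] by blast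
  obtain u w where uw: "z = (u, w)" by (cases z)
  define P where "P = u * F + w * G"
  have P: "u \<in> polys_over V" "w \<in> polys_over V" "P \<noteq> 0" using z by (simp_all add: uw S_def P_def)
  have min': "degree P \<le> degree (x * F + y * G)"
    if "x \<in> polys_over V" "y \<in> polys_over V" "x * F + y * G \<noteq> 0" for x y
    using min[of "(x, y)"] that by (simp add: uw S_def P_def deg_def)
  have PV: "P \<in> polys_over V" using P F G by (simp add: P_def polys_over_add polys_over_mult)
  have lc: "lead_coeff P ^ k \<in> mpolys V" "lead_coeff P ^ k \<noteq> 0" for k
    using P(3) by (simp_all add: mpolys_power lead_coeff_in_mpolys[OF PV])
  have divides: "\<exists>k q. q \<in> polys_over V \<and> smult (lead_coeff P ^ k) (x * F + y * G) = q * P"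
    if xy: "x \<in> polys_over V" "y \<in> polys_over V" for x y
  proof -
    obtain k q where "q \<in> polys_over V" "smult (lead_coeff P ^ k) (x * F + y * G) = q * P"
      by (rule min_degree_combination_pseudo_divides[OF F(1) G(1) P_def P min' refl xy])
    thus ?thesis by blast
  qed
  have "degree P = 0"
  proof (rule ccontr)
    assume "degree P \<noteq> 0"
    obtain k q where "q \<in> polys_over V" "smult (lead_coeff P ^ k) F = q * P"
      using divides[OF polys_over_one polys_over_zero] by auto
    then obtain c where c: "c \<in> mpolys V" "P = smult c F"
      using smult_eq_mult_irreducible_associate[OF v F(1) _ PV lc _ F(3) \<open>degree P \<noteq> 0\<close>] by blast
    obtain k' q' where q': "q' \<in> polys_over V" "smult (lead_coeff P ^ k') G = q' * P"
      using divides[OF polys_over_zero polys_over_one] by auto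
    hence "smult (lead_coeff P ^ k') G = F * smult c q'" using c(2) by (simp add: mult.commute)
    then obtain Q where "G = F * Q"
      using primitive_dvd_smult[OF F(1,2) lc polys_over_smult[OF c(1) q'(1)]] by blast
    thus False using G(2) by simp
  qed
  hence "P = [:lead_coeff P:]" using degree_0_id[of P] by simp
  thus ?thesis using that[of "lead_coeff P" u w] P lc[of 1] by (simp add: P_def)
qed

lemma primitive_irreducible_dvd_mult:
  fixes F G H W :: "'k mpoly poly"
  assumes v: "v \<notin> V"
    and polys: "F \<in> polys_over V" "G \<in> polys_over V" "H \<in> polys_over V" "W \<in> polys_over V"
    and F: "primitive V F" "irreducible (poly F (var v))" and GH: "G * H = F * W"
    and not_dvd: "\<not> poly F (var v) dvd poly G (var v)"
  shows "poly F (var v) dvd poly H (var v)"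
proof -
  obtain c u u' where c: "c \<in> mpolys V" "c \<noteq> 0" "u \<in> polys_over V" "u' \<in> polys_over V"
      and bezout: "[:c:] = u * F + u' * G"
    by (rule exists_const_combination[OF v polys(1) F polys(2) not_dvd])
  have "u * H + u' * W \<in> polys_over V"
    using c(3,4) polys(3,4) by (simp add: polys_over_add polys_over_mult)
  moreover have "smult c H = F * (u * H + u' * W)"
    using arg_cong[OF bezout, of "\<lambda>X. X * H"] GH by (simp add: algebra_simps)
  ultimately obtain Q where "H = F * Q" by (rule primitive_dvd_smult[OF polys(1) F(1) c(1,2)])
  thus ?thesis by simp
qed

lemma irreducible_prime_insert:
  fixes f g h :: "'k mpoly"
  assumes v: "v \<notin> V" and fgh: "f \<in> mpolys (insert v V)" "g \<in> mpolys (insert v V)" "h \<in> mpolys (insert v V)"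
    and irr: "irreducible f" and dvd: "f dvd g * h"
  shows "f dvd g \<or> f dvd h"
proof (cases "f dvd g \<or> g * h = 0")
  case False
  obtain w where w: "g * h = f * w" using dvd by (rule dvdE)
  have "w \<in> mpolys (insert v V)"
    using mpolys_dvd[of w "g * h"] False mpolys_mult[OF fgh(2,3)] w by simp
  then obtain W where W: "W \<in> polys_over V" "poly W (var v) = w" by (rule poly_var_surj)
  obtain F where F: "F \<in> polys_over V" "poly F (var v) = f" by (rule poly_var_surj[OF fgh(1)])
  obtain G where G: "G \<in> polys_over V" "poly G (var v) = g" by (rule poly_var_surj[OF fgh(2)])
  obtain H where H: "H \<in> polys_over V" "poly H (var v) = h" by (rule poly_var_surj[OF fgh(3)])
  have GH: "G * H = F * W" using w F G H W by (intro poly_var_inj[OF v]) (simp_all add: polys_over_mult)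
  show ?thesis
  proof (cases "degree F = 0")
    case True
    define c where "c = coeff F 0"
    have Fc: "F = [:c:]" using degree_0_id[OF True] by (simp add: c_def)
    have "c \<in> mpolys V" using F(1) by (simp add: c_def polys_over_def)
    moreover have "irreducible c" using irr F(2) by (simp add: Fc)
    moreover have "[:c:] dvd G * H" unfolding GH Fc by (rule dvd_triv_left)
    ultimately have "[:c:] dvd G \<or> [:c:] dvd H" using const_irreducible_dvd_mult G(1) H(1) by blast
    moreover have "poly [:c:] (var v) = f" using F(2) by (simp add: Fc)
    ultimately show ?thesis using G(2) H(2) by (auto elim!: dvdE)
  next
    case False
    have "primitive V F" using irreducible_imp_primitive[OF v F(1)] irr F(2) False by simp
    thus ?thesis using primitive_irreducible_dvd_mult[OF v F(1) G(1) H(1) W(1) _ _ GH] irr F(2) G(2) H(2)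
        \<open>\<not> (f dvd g \<or> g * h = 0)\<close> by auto
  qed
qed auto

end

lemma irreducible_prime_mpolys:
  fixes f g h :: "'k::field mpoly"
  assumes "finite V" "f \<in> mpolys V" "g \<in> mpolys V" "h \<in> mpolys V" "irreducible f" "f dvd g * h"
  shows "f dvd g \<or> f dvd h"
  using assms
proof (induction V arbitrary: f g h rule: finite_induct)
  case empty
  have "f \<noteq> 0" using empty.prems(4) by (auto simp: irreducible_def)
  moreover have "total_degree f = 0" using \<open>f \<noteq> 0\<close> empty.prems(1)
    by (auto simp: total_degree_def wdegree_eq_0_iff deg_in_eq_0_iff mpolys_def vars_def)
  ultimately have "f dvd 1" by (simp add: mpoly_dvd_one_iff)
  thus ?case using empty.prems(4) by (simp add: irreducible_def)
next
  case (insert v V)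
  show ?case using irreducible_prime_insert[OF insert.IH insert.hyps(2) insert.prems(1-5)] by blast
qed

theorem irreducible_imp_prime_elem_mpoly: "irreducible (p :: 'k::field mpoly) \<Longrightarrow> prime_elem p"
  unfolding prime_elem_def
proof (intro conjI allI impI)
  fix a b assume "irreducible p" "p dvd a * b"
  thus "p dvd a \<or> p dvd b"
    by (intro irreducible_prime_mpolys[where V = "vars p \<union> vars a \<union> vars b"])
       (auto simp: finite_vars intro: mpolys_mono[OF mpolys_vars])
qed (auto simp: irreducible_def)

lemma coprime_dvd_mult_mpoly:
  fixes a b c :: "'k::field mpoly"
  assumes "a \<noteq> 0" "\<And>h. h dvd a \<Longrightarrow> h dvd b \<Longrightarrow> h dvd 1" "a dvd c * b"
  shows "a dvd c"
  using assms
proof (induction "total_degree a" arbitrary: a c rule: less_induct)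
  case less
  show ?case
  proof (cases "a dvd 1")
    case False
    obtain q where q: "irreducible q" "q dvd a"
      using exists_irreducible_factor less.prems(1) False by blast
    have "\<not> q dvd b" using less.prems(2) q irreducible_not_unit by blast
    moreover have "q dvd c * b" using q(2) less.prems(3) by (rule dvd_trans)
    ultimately have "q dvd c" using irreducible_imp_prime_elem_mpoly[OF q(1)] by (simp add: prime_elem_dvd_mult_iff)
    then obtain c' where c': "c = q * c'" by (rule dvdE)
    obtain a' where a': "a = q * a'" using q(2) by (rule dvdE)
    have "q \<noteq> 0" "a' \<noteq> 0" using a' less.prems(1) by auto
    moreover have "total_degree q \<noteq> 0"
      using irreducible_not_unit[OF q(1)] \<open>q \<noteq> 0\<close> by (simp add: mpoly_dvd_one_iff)
    ultimately have "total_degree a' < total_degree a" using total_degree_mult[of q a'] a' by simp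
    moreover have "a' dvd c' * b"
      using less.prems(3) \<open>q \<noteq> 0\<close> by (simp add: a' c' mult.assoc)
    moreover have "h dvd 1" if "h dvd a'" "h dvd b" for h
      using less.prems(2) that a' by (meson dvd_mult2 dvd_mult_right dvd_trans dvd_triv_right)
    ultimately have "a' dvd c'" using less.hyps \<open>a' \<noteq> 0\<close> by blast
    thus ?thesis by (simp add: a' c')
  qed (use dvd_trans[OF _ one_dvd] in blast)
qed

text \<open>s1 / s0 and s2 / s0 are coprime, so s1 / s0 divides b.\<close>
lemma total_degree_le_gcd_add:
  fixes s0 s1 s2 b :: "'k::field mpoly"
  assumes gcd: "s0 dvd s1" "s0 dvd s2" "\<And>h. h dvd s1 \<Longrightarrow> h dvd s2 \<Longrightarrow> h dvd s0"
    and "s1 \<noteq> 0" "b \<noteq> 0" "s1 dvd b * s2"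
  shows "total_degree s1 \<le> total_degree s0 + total_degree b"
proof -
  obtain p1 where p1: "s1 = s0 * p1" using gcd(1) by (rule dvdE)
  obtain p2 where p2: "s2 = s0 * p2" using gcd(2) by (rule dvdE)
  have "s0 \<noteq> 0" "p1 \<noteq> 0" using assms(4) p1 by auto
  have "s0 * p1 dvd s0 * (b * p2)" using assms(6) by (simp add: p1 p2 mult.left_commute)
  hence "p1 dvd b * p2" using \<open>s0 \<noteq> 0\<close> by simp
  moreover have "h dvd 1" if "h dvd p1" "h dvd p2" for h
  proof -
    have "s0 * h dvd s0 * 1" using gcd(3) that by (simp add: p1 p2)
    thus ?thesis using \<open>s0 \<noteq> 0\<close> by simp
  qed
  ultimately have "p1 dvd b" using coprime_dvd_mult_mpoly \<open>p1 \<noteq> 0\<close> by blast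
  then obtain c where "b = p1 * c" by (rule dvdE)
  hence "total_degree b = total_degree p1 + total_degree c"
    using \<open>p1 \<noteq> 0\<close> assms(5) total_degree_mult by auto
  moreover have "total_degree s1 = total_degree s0 + total_degree p1"
    using p1 \<open>s0 \<noteq> 0\<close> \<open>p1 \<noteq> 0\<close> total_degree_mult by auto
  ultimately show ?thesis by simp
qed

section \<open>Coefficient functions as polynomials\<close>

definition mpoly_of :: "((nat \<Rightarrow> nat) \<Rightarrow> 'k::zero) \<Rightarrow> 'k mpoly" where
  "mpoly_of P = Abs_poly_mapping (\<lambda>M. P (lookup M))"

lemma is_mindex_finite: "is_mindex n J \<Longrightarrow> finite {i. J i \<noteq> 0}"
  unfolding is_mindex_def by (rule finite_subset[of _ "{..<n}"]) (auto simp: not_less[symmetric])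

lemma lookup_Abs_mindex: "is_mindex n J \<Longrightarrow> lookup (Abs_poly_mapping J) = J"
  using is_mindex_finite by simp

lemma lookup_mpoly_of:
  assumes "is_mpoly n P" shows "lookup (mpoly_of P) = (\<lambda>M. P (lookup M))"
proof -
  have "{M. P (lookup M) \<noteq> 0} \<subseteq> Abs_poly_mapping ` supp P"
    by (auto simp: supp_def intro!: image_eqI[of _ _ "lookup _"])
  hence "finite {M. P (lookup M) \<noteq> 0}"
    using assms by (auto simp: is_mpoly_def intro: finite_subset)
  thus ?thesis by (simp add: mpoly_of_def)
qed

lemma mpoly_of_inj:
  assumes "is_mpoly n P" "is_mpoly n Q" "mpoly_of P = mpoly_of Q" shows "P = Q"
proof
  fix J
  show "P J = Q J"
  proof (cases "J \<in> supp P \<union> supp Q")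
    case True
    hence "lookup (Abs_poly_mapping J) = J"
      using assms(1,2) lookup_Abs_mindex unfolding is_mpoly_def by blast
    thus ?thesis using assms(3) lookup_mpoly_of[OF assms(1)] lookup_mpoly_of[OF assms(2)] by metis
  qed (simp add: supp_def)
qed

lemma mpoly_of_zero: "mpoly_of (\<lambda>_. 0) = 0"
  by (simp add: mpoly_of_def)

lemma mpoly_of_eq_0_iff: "is_mpoly n P \<Longrightarrow> mpoly_of P = 0 \<longleftrightarrow> P = (\<lambda>_. 0)"
  using mpoly_of_inj[of n P "\<lambda>_. 0"] by (auto simp: mpoly_of_zero is_mpoly_def supp_def)

lemma keys_mpoly_of: "is_mpoly n P \<Longrightarrow> keys (mpoly_of P) = Abs_poly_mapping ` supp P"
  by (force simp: in_keys_iff lookup_mpoly_of supp_def is_mpoly_def lookup_Abs_mindex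
      intro!: image_eqI[of _ _ "lookup _"])

lemma mpoly_of_in_mpolys:
  assumes P: "is_mpoly n P" shows "mpoly_of P \<in> mpolys {..<n}"
proof -
  have "keys M \<subseteq> {..<n}" if M: "M \<in> keys (mpoly_of P)" for M
  proof -
    obtain J where J: "J \<in> supp P" "M = Abs_poly_mapping J" using M keys_mpoly_of[OF P] by auto
    hence "is_mindex n J" "lookup M = J" using P lookup_Abs_mindex by (auto simp: is_mpoly_def)
    thus ?thesis unfolding is_mindex_def by (metis in_keys_iff lessThan_iff not_le subsetI)
  qed
  thus ?thesis by (auto simp: mpolys_def vars_def)
qed

lemma mpoly_of_surj:
  assumes "q \<in> mpolys {..<n}" obtains P where "is_mpoly n P" "mpoly_of P = q"
proof
  define P where "P J = (if finite {i. J i \<noteq> 0} then lookup q (Abs_poly_mapping J) else 0)" for J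
  have "supp P \<subseteq> lookup ` keys q"
    by (auto simp: supp_def P_def in_keys_iff split: if_splits intro!: image_eqI)
  moreover have "is_mindex n (lookup M)" if "M \<in> keys q" for M
  proof -
    have "keys M \<subseteq> {..<n}" using assms that by (auto simp: mpolys_def vars_def)
    thus ?thesis unfolding is_mindex_def by (metis in_keys_iff lessThan_iff not_le subsetD)
  qed
  ultimately show P: "is_mpoly n P" by (auto simp: is_mpoly_def intro: finite_subset)
  show "mpoly_of P = q" by (rule poly_mapping_eqI) (simp add: lookup_mpoly_of[OF P] P_def)
qed

lemma mdeg_Abs_mindex: "is_mindex n J \<Longrightarrow> deg_in UNIV (Abs_poly_mapping J) = mdeg n J"
  by (auto simp: deg_in_def mdeg_def lookup_Abs_mindex keys.rep_eq is_mindex_finite is_mindex_def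
      intro!: sum.mono_neutral_left simp flip: not_less)

lemma total_degree_mpoly_of:
  assumes P: "is_mpoly n P" shows "total_degree (mpoly_of P) = pdeg n P"
proof -
  have "deg_in UNIV ` keys (mpoly_of P) = mdeg n ` supp P"
    unfolding keys_mpoly_of[OF P] image_image
    by (rule image_cong) (use P mdeg_Abs_mindex in \<open>auto simp: is_mpoly_def\<close>)
  thus ?thesis by (simp add: total_degree_def wdegree_def pdeg_def)
qed

lemma supp_pmult:
  "supp (pmult P Q) \<subseteq> (\<lambda>(I, J). (\<lambda>i. I i + J i)) ` (supp P \<times> supp Q)"
proof
  fix M assume "M \<in> supp (pmult P Q)"
  then obtain I J where "I \<in> supp P" "J \<in> supp Q" "(\<lambda>i. I i + J i) = M"
    unfolding supp_def pmult_def
    by (auto elim!: sum.not_neutral_contains_not_neutral split: if_splits)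
  thus "M \<in> (\<lambda>(I, J). (\<lambda>i. I i + J i)) ` (supp P \<times> supp Q)" by force
qed

lemma is_mpoly_pmult: "is_mpoly n P \<Longrightarrow> is_mpoly n Q \<Longrightarrow> is_mpoly n (pmult P Q)"
  using supp_pmult[of P Q] unfolding is_mpoly_def is_mindex_def
  by (auto intro: finite_subset)

lemma mpoly_of_eq_sum:
  assumes P: "is_mpoly n P" shows "mpoly_of P = (\<Sum>I\<in>supp P. single (Abs_poly_mapping I) (P I))"
proof (rule poly_mapping_eqI)
  fix M
  have "(Abs_poly_mapping I = M) = (I = lookup M)" if "I \<in> supp P" for I
    using that P lookup_Abs_mindex by (force simp: is_mpoly_def)
  hence "lookup (\<Sum>I\<in>supp P. single (Abs_poly_mapping I) (P I)) M = (\<Sum>I\<in>supp P. if I = lookup M then P I else 0)"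
    by (simp add: lookup_sum lookup_single when_def cong: sum.cong)
  also have "\<dots> = P (lookup M)" using P by (simp add: sum.delta' is_mpoly_def supp_def)
  finally show "lookup (mpoly_of P) M = lookup (\<Sum>I\<in>supp P. single (Abs_poly_mapping I) (P I)) M"
    by (simp add: lookup_mpoly_of[OF P])
qed

lemma mpoly_of_pmult:
  assumes P: "is_mpoly n P" and Q: "is_mpoly n Q" shows "mpoly_of (pmult P Q) = mpoly_of P * mpoly_of Q"
proof (rule poly_mapping_eqI)
  fix M
  have add: "Abs_poly_mapping I + Abs_poly_mapping J = M \<longleftrightarrow> (\<lambda>i. I i + J i) = lookup M"
    if "I \<in> supp P" "J \<in> supp Q" for I J
  proof -
    have "lookup (Abs_poly_mapping I) = I" "lookup (Abs_poly_mapping J) = J"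
      using that P Q lookup_Abs_mindex unfolding is_mpoly_def by blast+
    hence "lookup (Abs_poly_mapping I + Abs_poly_mapping J) = (\<lambda>i. I i + J i)"
      by (simp add: fun_eq_iff lookup_add)
    thus ?thesis by (metis lookup_inverse)
  qed
  have "mpoly_of P * mpoly_of Q
      = (\<Sum>I\<in>supp P. \<Sum>J\<in>supp Q. single (Abs_poly_mapping I + Abs_poly_mapping J) (P I * Q J))"
    by (simp add: mpoly_of_eq_sum[OF P] mpoly_of_eq_sum[OF Q] sum_product mult_single)
  hence "lookup (mpoly_of P * mpoly_of Q) M
      = (\<Sum>I\<in>supp P. \<Sum>J\<in>supp Q. if (\<lambda>i. I i + J i) = lookup M then P I * Q J else 0)"
    by (simp add: lookup_sum lookup_single when_def add cong: sum.cong)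
  moreover have "lookup (mpoly_of (pmult P Q)) M = pmult P Q (lookup M)"
    by (simp add: lookup_mpoly_of[OF is_mpoly_pmult[OF P Q]])
  ultimately show "lookup (mpoly_of (pmult P Q)) M = lookup (mpoly_of P * mpoly_of Q) M"
    by (simp add: pmult_def)
qed

lemma pdvd_imp_dvd: "is_mpoly n H \<Longrightarrow> pdvd n H G \<Longrightarrow> mpoly_of H dvd mpoly_of G"
  unfolding pdvd_def by (auto simp: mpoly_of_pmult)

lemma dvd_imp_pdvd:
  fixes H G :: "(nat \<Rightarrow> nat) \<Rightarrow> 'k::field"
  assumes H: "is_mpoly n H" and G: "is_mpoly n G" "mpoly_of G \<noteq> 0" and dvd: "mpoly_of H dvd mpoly_of G"
  shows "pdvd n H G"
proof -
  obtain q where q: "mpoly_of G = mpoly_of H * q" using dvd by (rule dvdE)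
  have "q \<in> mpolys {..<n}" using mpolys_dvd[OF _ G(2) mpoly_of_in_mpolys[OF G(1)]] q by simp
  then obtain R where R: "is_mpoly n R" "mpoly_of R = q" by (rule mpoly_of_surj)
  hence "mpoly_of G = mpoly_of (pmult H R)" using q by (simp add: mpoly_of_pmult[OF H])
  hence "G = pmult H R" by (rule mpoly_of_inj[OF G(1) is_mpoly_pmult[OF H R(1)]])
  thus ?thesis using R(1) by (auto simp: pdvd_def)
qed

lemma pdeg_le_gcd_add:
  fixes S0 S1 S2 B1 B2 :: "(nat \<Rightarrow> nat) \<Rightarrow> 'k::field"
  assumes gcd: "is_gcd n S0 S1 S2"
    and mp: "is_mpoly n S1" "is_mpoly n S2" "is_mpoly n B1" "is_mpoly n B2"
    and nz: "S1 \<noteq> (\<lambda>_. 0)" "S2 \<noteq> (\<lambda>_. 0)" "B1 \<noteq> (\<lambda>_. 0)"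
    and eq: "\<And>J. pmult B1 S2 J + pmult S1 B2 J = 0"
  shows "pdeg n S1 \<le> pdeg n S0 + pdeg n B1"
proof -
  have S0: "is_mpoly n S0" using gcd by (simp add: is_gcd_def)
  have nz': "mpoly_of S1 \<noteq> 0" "mpoly_of S2 \<noteq> 0" "mpoly_of B1 \<noteq> 0"
    using nz mp by (simp_all add: mpoly_of_eq_0_iff)
  have "mpoly_of (pmult B1 S2) + mpoly_of (pmult S1 B2) = 0"
    using eq is_mpoly_pmult[OF mp(3,2)] is_mpoly_pmult[OF mp(1,4)]
    by (intro poly_mapping_eqI) (simp add: lookup_add lookup_mpoly_of)
  hence "mpoly_of B1 * mpoly_of S2 = mpoly_of S1 * - mpoly_of B2"
    by (simp add: mpoly_of_pmult[OF mp(3,2)] mpoly_of_pmult[OF mp(1,4)] add_eq_0_iff)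
  hence "mpoly_of S1 dvd mpoly_of B1 * mpoly_of S2" by simp
  moreover have "mpoly_of S0 dvd mpoly_of S1" "mpoly_of S0 dvd mpoly_of S2"
    using gcd pdvd_imp_dvd[OF S0] by (auto simp: is_gcd_def)
  moreover have "h dvd mpoly_of S0" if h: "h dvd mpoly_of S1" "h dvd mpoly_of S2" for h
  proof -
    have "h \<in> mpolys {..<n}" by (rule mpolys_dvd[OF h(1) nz'(1) mpoly_of_in_mpolys[OF mp(1)]])
    then obtain H where H: "is_mpoly n H" "mpoly_of H = h" by (rule mpoly_of_surj)
    have "pdvd n H S1" "pdvd n H S2" using dvd_imp_pdvd H mp nz' h by blast+
    hence "pdvd n H S0" using gcd H(1) unfolding is_gcd_def by blast
    thus ?thesis using pdvd_imp_dvd[OF H(1)] H(2) by blast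
  qed
  ultimately have "total_degree (mpoly_of S1) \<le> total_degree (mpoly_of S0) + total_degree (mpoly_of B1)"
    using total_degree_le_gcd_add nz'(1,3) by blast
  thus ?thesis by (simp only: total_degree_mpoly_of[OF S0] total_degree_mpoly_of[OF mp(1)]
      total_degree_mpoly_of[OF mp(3)])
qed

section \<open>Composition of differential operators\<close>

lemma mdeg_add: "mdeg n (\<lambda>i. I i + J i) = mdeg n I + mdeg n J"
  by (simp add: mdeg_def sum.distrib)

text \<open>With an integer degree, homogeneous components of negative degree are simply zero.\<close>
definition hom_comp :: "nat \<Rightarrow> int \<Rightarrow> ((nat \<Rightarrow> nat) \<Rightarrow> 'k::zero) \<Rightarrow> ((nat \<Rightarrow> nat) \<Rightarrow> 'k)" where
  "hom_comp n e A = (\<lambda>J. if int (mdeg n J) = e then A J else 0)"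

lemma supp_hom_comp: "supp (hom_comp n e A) = {J \<in> supp A. int (mdeg n J) = e}"
  by (auto simp: supp_def hom_comp_def)

lemma homogeneous_hom_comp: "homogeneous n (hom_comp n e A) (nat e)"
  by (auto simp: homogeneous_def supp_hom_comp)

lemma is_mpoly_hom_comp: "is_op n A \<Longrightarrow> is_mpoly n (hom_comp n e A)"
  by (auto simp: is_op_def is_mpoly_def supp_hom_comp)

lemma pdeg_hom_comp:
  assumes "hom_comp n e A \<noteq> (\<lambda>_. 0)" shows "0 \<le> e" "pdeg n (hom_comp n e A) = nat e"
proof -
  obtain J where "hom_comp n e A J \<noteq> 0" using assms by auto
  hence "mdeg n ` supp (hom_comp n e A) = {nat e}" "0 \<le> e"
    by (auto simp: supp_hom_comp supp_def hom_comp_def split: if_splits)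
  thus "0 \<le> e" "pdeg n (hom_comp n e A) = nat e" by (simp_all add: pdeg_def)
qed

lemma pdeg_homogeneous: "homogeneous n X a \<Longrightarrow> X \<noteq> (\<lambda>_. 0) \<Longrightarrow> pdeg n X = a"
proof -
  assume "homogeneous n X a" "X \<noteq> (\<lambda>_. 0)"
  hence "mdeg n ` supp X = {a}" by (auto simp: homogeneous_def supp_def)
  thus "pdeg n X = a" by (simp add: pdeg_def)
qed

lemma ord_less_iff:
  assumes "finite (supp X)"
  shows "ord n X < ereal (real_of_int e) \<longleftrightarrow> (\<forall>J\<in>supp X. int (mdeg n J) < e)"
proof (cases "supp X = {}")
  case False
  define m where "m = Max (mdeg n ` supp X)"
  have "ord n X < ereal (real_of_int e) \<longleftrightarrow> int m < e"
    using False of_int_less_iff[of "int m" e] by (simp add: ord_def m_def)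
  also have "\<dots> \<longleftrightarrow> (\<forall>J\<in>supp X. int (mdeg n J) < e)"
    using assms False Max_in[of "mdeg n ` supp X"] Max_ge[of "mdeg n ` supp X"]
    unfolding m_def by (fastforce simp del: Max_less_iff)
  finally show ?thesis .
qed (simp add: ord_def)

lemma supp_op_minus: "supp (op_minus A B) \<subseteq> supp A \<union> supp B"
  by (auto simp: supp_def op_minus_def)

lemma finite_supp_op_minus: "finite (supp A) \<Longrightarrow> finite (supp B) \<Longrightarrow> finite (supp (op_minus A B))"
  using supp_op_minus by (metis finite_UnI finite_subset)

lemma symbol_top_degree:
  fixes F S :: "(nat \<Rightarrow> nat) \<Rightarrow> 'k::zero"
  assumes F: "is_op n F" "Sym n F = S" and S: "S \<noteq> (\<lambda>_. 0)" "homogeneous n S a"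
  shows "\<forall>J\<in>supp F. mdeg n J \<le> a" "hom_comp n a F = S"
proof -
  obtain J0 where J0: "S J0 \<noteq> 0" using S(1) by auto
  have "supp F \<noteq> {}" using F(2) S(1) by (auto simp: Sym_def ord_def)
  hence ordF: "ord n F = ereal (real (Max (mdeg n ` supp F)))" by (simp add: ord_def)
  have "mdeg n J0 = Max (mdeg n ` supp F)" "mdeg n J0 = a"
    using J0 F(2) S(2) by (auto simp: Sym_def ordF homogeneous_def supp_def split: if_splits)
  thus "\<forall>J\<in>supp F. mdeg n J \<le> a" "hom_comp n a F = S"
    using F by (auto simp: is_op_def hom_comp_def Sym_def ordF fun_eq_iff)
qed

lemma finite_supp_op_comp:
  assumes F: "is_op n F" and G: "is_op n G"
  shows "finite (supp (op_comp \<delta> n F G))"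
proof -
  define c where "c = (\<Sum>I\<in>supp F. mdeg n I) + (\<Sum>J\<in>supp G. mdeg n J)"
  have mdeg_ge: "I i \<le> mdeg n I" if "i < n" for I :: "nat \<Rightarrow> nat" and i
    unfolding mdeg_def using that by (intro member_le_sum) auto
  have "P \<in> {P. \<forall>i. (i \<in> {..<n} \<longrightarrow> P i \<in> {..c}) \<and> (i \<notin> {..<n} \<longrightarrow> P i = 0)}"
    if P: "P \<in> supp (op_comp \<delta> n F G)" for P
  proof -
    have "op_comp \<delta> n F G P \<noteq> 0" using P by (simp add: supp_def)
    then obtain I J K where I: "I \<in> supp F" and J: "J \<in> supp G" and K: "(\<lambda>i. I i - K i + J i) = P"
      unfolding op_comp_def by (auto elim!: sum.not_neutral_contains_not_neutral)
    have "P i = 0" if "n \<le> i" for i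
      using F G I J K that by (auto simp: is_op_def is_mindex_def)
    moreover have "P i \<le> c" if "i < n" for i
    proof -
      have "P i \<le> mdeg n I + mdeg n J" using mdeg_ge[OF that, of I] mdeg_ge[OF that, of J] K by auto
      also have "\<dots> \<le> c" unfolding c_def using F G I J
        by (intro add_mono member_le_sum) (auto simp: is_op_def)
      finally show ?thesis .
    qed
    ultimately show ?thesis by (simp add: not_less)
  qed
  thus ?thesis by (blast intro: finite_subset[OF _ finite_set_of_finite_funs])
qed

lemma dpow_zero_index: "dpow \<delta> m (\<lambda>_. 0) a = a"
  by (induction m) simp_all

text \<open>In the product of a D^I and b D^J, the coefficient at a multi-index of degree at least
  |I| + |J| comes only from the term with no derivative falling on b.\<close>
lemma op_comp_term_top_degree:
  fixes a b :: "'k::field"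
  assumes "mdeg n I + mdeg n J \<le> mdeg n P"
  shows "(\<Sum>K\<in>{K. is_mindex n K \<and> (\<forall>i<n. K i \<le> I i) \<and> (\<lambda>i. I i - K i + J i) = P}.
      of_nat (mbinom n I K) * a * dpow \<delta> n K b) = (if (\<lambda>i. I i + J i) = P then a * b else 0)"
proof -
  define Ks where "Ks = {K. is_mindex n K \<and> (\<forall>i<n. K i \<le> I i) \<and> (\<lambda>i. I i - K i + J i) = P}"
  have "K = (\<lambda>_. 0)" if K: "K \<in> Ks" for K
  proof -
    have Km: "is_mindex n K" "\<forall>i<n. K i \<le> I i" "(\<lambda>i. I i - K i + J i) = P" using K by (auto simp: Ks_def)
    have "mdeg n I = mdeg n (\<lambda>i. I i - K i) + mdeg n K"
      unfolding mdeg_def sum.distrib[symmetric] by (rule sum.cong) (use Km(2) in auto)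
    moreover have "mdeg n P = mdeg n (\<lambda>i. I i - K i) + mdeg n J"
      using Km(3) mdeg_add[of n "\<lambda>i. I i - K i" J] by simp
    ultimately have "mdeg n K = 0" using assms by simp
    hence "\<forall>i<n. K i = 0" by (simp add: mdeg_def)
    thus ?thesis using Km(1) unfolding is_mindex_def by (metis not_less)
  qed
  moreover have "(\<lambda>_. 0) \<in> Ks \<longleftrightarrow> (\<lambda>i. I i + J i) = P" by (simp add: Ks_def is_mindex_def)
  ultimately have "Ks = (if (\<lambda>i. I i + J i) = P then {\<lambda>_. 0} else {})" by auto
  thus ?thesis by (simp add: Ks_def[symmetric] mbinom_def dpow_zero_index)
qed

lemma pmult_eq_sum:
  assumes "finite SX" "finite SY" "supp X \<subseteq> SX" "supp Y \<subseteq> SY"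
  shows "pmult X Y P = (\<Sum>I\<in>SX. \<Sum>J\<in>SY. if (\<lambda>i. I i + J i) = P then X I * Y J else 0)"
proof -
  define f where "f I J = (if (\<lambda>i. I i + J i) = P then X I * Y J else 0)" for I J
  have inner: "(\<Sum>J\<in>supp Y. f I J) = (\<Sum>J\<in>SY. f I J)" for I
    by (rule sum.mono_neutral_left) (use assms in \<open>auto simp: supp_def f_def\<close>)
  have "(\<Sum>J\<in>SY. f I J) = 0" if "I \<notin> supp X" for I
    using that by (simp add: supp_def f_def cong: if_cong)
  hence "(\<Sum>I\<in>supp X. \<Sum>J\<in>SY. f I J) = (\<Sum>I\<in>SX. \<Sum>J\<in>SY. f I J)"
    by (intro sum.mono_neutral_left) (use assms in auto)
  thus ?thesis using inner by (simp add: pmult_def f_def)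
qed

lemma op_comp_top_degree:
  fixes A B :: "(nat \<Rightarrow> nat) \<Rightarrow> 'k::field"
  assumes fin: "finite (supp A)" "finite (supp B)"
    and deg: "\<forall>I\<in>supp A. int (mdeg n I) \<le> a" "\<forall>J\<in>supp B. int (mdeg n J) \<le> b"
    and P: "a + b \<le> int (mdeg n P)"
  shows "op_comp \<delta> n A B P = pmult (hom_comp n a A) (hom_comp n b B) P"
proof -
  have "op_comp \<delta> n A B P = (\<Sum>I\<in>supp A. \<Sum>J\<in>supp B. if (\<lambda>i. I i + J i) = P then A I * B J else 0)"
    unfolding op_comp_def using deg P
    by (intro sum.cong refl op_comp_term_top_degree) fastforce
  also have "\<dots> = (\<Sum>I\<in>supp A. \<Sum>J\<in>supp B.
      if (\<lambda>i. I i + J i) = P then hom_comp n a A I * hom_comp n b B J else 0)"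
  proof (intro sum.cong refl)
    fix I J assume "I \<in> supp A" "J \<in> supp B"
    moreover have "mdeg n I + mdeg n J = mdeg n P" if "(\<lambda>i. I i + J i) = P"
      using that mdeg_add by metis
    ultimately show "(if (\<lambda>i. I i + J i) = P then A I * B J else 0) =
        (if (\<lambda>i. I i + J i) = P then hom_comp n a A I * hom_comp n b B J else 0)"
      using deg P by (fastforce simp: hom_comp_def)
  qed
  also have "\<dots> = pmult (hom_comp n a A) (hom_comp n b B) P"
    by (rule pmult_eq_sum[symmetric]) (use fin in \<open>auto simp: supp_hom_comp\<close>)
  finally show ?thesis .
qed

lemma pmult_homogeneous_eq_0:
  assumes "homogeneous n X a" "homogeneous n Y b" "mdeg n P \<noteq> a + b"
  shows "pmult X Y P = (0::'k::comm_ring)"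
  unfolding pmult_def
proof (intro sum.neutral ballI)
  fix I J assume "I \<in> supp X" "J \<in> supp Y"
  hence "mdeg n I = a" "mdeg n J = b" using assms(1,2) unfolding homogeneous_def by auto
  hence "(\<lambda>i. I i + J i) \<noteq> P" using assms(3) mdeg_add by metis
  thus "(if (\<lambda>i. I i + J i) = P then X I * Y J else 0) = 0" by simp
qed

lemma sum_supp_add:
  fixes A B :: "(nat \<Rightarrow> nat) \<Rightarrow> 'b::comm_monoid_add" and g :: "(nat \<Rightarrow> nat) \<Rightarrow> 'b \<Rightarrow> 'c::comm_monoid_add"
  assumes "finite (supp A)" "finite (supp B)"
    and g: "\<And>I. g I 0 = 0" "\<And>I x y. g I (x + y) = g I x + g I y"
  shows "(\<Sum>I\<in>supp (\<lambda>J. A J + B J). g I (A I + B I)) = (\<Sum>I\<in>supp A. g I (A I)) + (\<Sum>I\<in>supp B. g I (B I))"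
proof -
  have extend: "(\<Sum>I\<in>supp C. g I (C I)) = (\<Sum>I\<in>supp A \<union> supp B. g I (C I))"
    if "supp C \<subseteq> supp A \<union> supp B" for C
    by (rule sum.mono_neutral_left) (use assms that in \<open>auto simp: supp_def\<close>)
  show ?thesis
    by (subst (1 2 3) extend) (auto simp: supp_def g sum.distrib)
qed

lemma op_comp_add_left:
  fixes A B C :: "(nat \<Rightarrow> nat) \<Rightarrow> 'k::field"
  assumes "finite (supp A)" "finite (supp B)"
  shows "op_comp \<delta> n (\<lambda>J. A J + B J) C P = op_comp \<delta> n A C P + op_comp \<delta> n B C P"
  unfolding op_comp_def
  by (rule sum_supp_add[OF assms]) (simp_all add: distrib_left distrib_right sum.distrib)

lemma funpow_additive:
  fixes f :: "'a::plus \<Rightarrow> 'a"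
  assumes "\<And>a b. f (a + b) = f a + f b" shows "(f ^^ k) (a + b) = (f ^^ k) a + (f ^^ k) b"
  by (induction k) (simp_all add: assms)

lemma dpow_add:
  assumes "commuting_derivations n \<delta>"
  shows "dpow \<delta> n K (a + b) = dpow \<delta> n K a + dpow \<delta> n K b"
proof -
  have "dpow \<delta> m K (a + b) = dpow \<delta> m K a + dpow \<delta> m K b" if "m \<le> n" for m
    using that
  proof (induction m)
    case (Suc m)
    hence "\<And>a b. \<delta> m (a + b) = \<delta> m a + \<delta> m b"
      using assms unfolding commuting_derivations_def is_derivation_def by auto
    thus ?case using Suc by (simp add: funpow_additive)
  qed simp
  thus ?thesis by simp
qed

lemma dpow_zero: "commuting_derivations n \<delta> \<Longrightarrow> dpow \<delta> n K 0 = 0"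
  using dpow_add[of n \<delta> K 0 0] by (simp only: add_0 add_cancel_right_right)

lemma op_comp_add_right:
  fixes A B C :: "(nat \<Rightarrow> nat) \<Rightarrow> 'k::field"
  assumes "commuting_derivations n \<delta>" "finite (supp B)" "finite (supp C)"
  shows "op_comp \<delta> n A (\<lambda>J. B J + C J) P = op_comp \<delta> n A B P + op_comp \<delta> n A C P"
  unfolding op_comp_def sum.distrib[symmetric]
  by (intro sum.cong refl sum_supp_add[OF assms(2,3)])
     (simp_all add: dpow_zero[OF assms(1)] dpow_add[OF assms(1)] distrib_left sum.distrib)

lemma hom_comp_eq_0: "\<forall>J\<in>supp B. int (mdeg n J) \<le> e \<Longrightarrow> e < a \<Longrightarrow> hom_comp n a B = (\<lambda>_. 0)"
  by (force simp: hom_comp_def supp_def fun_eq_iff)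

lemma pmult_zero_left: "pmult (\<lambda>_. 0) Y = (\<lambda>_. (0::'k::comm_ring))"
  by (simp add: pmult_def supp_def fun_eq_iff)

lemma pmult_commute: "pmult X Y = pmult Y (X :: (nat \<Rightarrow> nat) \<Rightarrow> 'k::comm_ring)"
  unfolding pmult_def
proof (rule ext, subst sum.swap, intro sum.cong refl)
  fix M I J :: "nat \<Rightarrow> nat"
  have "(\<lambda>i. J i + I i) = (\<lambda>i. I i + J i)" by (simp add: fun_eq_iff add.commute)
  thus "(if (\<lambda>i. J i + I i) = M then X J * Y I else 0) = (if (\<lambda>i. I i + J i) = M then Y I * X J else 0)"
    by (simp add: mult.commute)
qed

lemma pmult_hom_comp_eq_0:
  assumes "homogeneous n Y b" "int (mdeg n P) \<noteq> a + int b"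
  shows "pmult (hom_comp n a X) Y P = (0::'k::comm_ring)"
proof (cases "0 \<le> a")
  case True
  thus ?thesis using assms by (intro pmult_homogeneous_eq_0[OF homogeneous_hom_comp]) auto
next
  case False
  hence "hom_comp n a X = (\<lambda>_. 0)" by (auto simp: hom_comp_def)
  thus ?thesis by (simp add: pmult_zero_left)
qed

lemma symbol_factors:
  fixes L S1 S2 :: "(nat \<Rightarrow> nat) \<Rightarrow> 'k::comm_ring"
  assumes "is_op n L" "ord n L = ereal (real d)" "Sym n L = pmult S1 S2"
    and "homogeneous n S1 d1" "homogeneous n S2 d2"
  shows "S1 \<noteq> (\<lambda>_. 0)" "S2 \<noteq> (\<lambda>_. 0)" "d = d1 + d2"
proof -
  have "supp L \<noteq> {}" "finite (supp L)" using assms(1,2) by (auto simp: ord_def is_op_def)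
  hence "Max (mdeg n ` supp L) \<in> mdeg n ` supp L" by simp
  moreover have "Max (mdeg n ` supp L) = d" using assms(2) \<open>supp L \<noteq> {}\<close> by (simp add: ord_def)
  ultimately obtain J where "J \<in> supp L" "mdeg n J = d" by auto
  hence J: "pmult S1 S2 J \<noteq> 0" "mdeg n J = d"
    using assms(2,3) by (auto simp: Sym_def supp_def dest: fun_cong[of _ _ J])
  thus "S1 \<noteq> (\<lambda>_. 0)" "S2 \<noteq> (\<lambda>_. 0)" by (auto simp: pmult_def supp_def)
  show "d = d1 + d2" using J pmult_homogeneous_eq_0[OF assms(4,5)] by metis
qed

lemma eq_if_ord_op_minus_less:
  fixes A B :: "(nat \<Rightarrow> nat) \<Rightarrow> 'k::ab_group_add"
  assumes "finite (supp A)" "finite (supp B)" "ord n (op_minus A B) < ereal (real_of_int t)"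
    and "t \<le> int (mdeg n P)"
  shows "B P = A P"
proof -
  have "P \<notin> supp (op_minus A B)"
    using assms ord_less_iff[OF finite_supp_op_minus[OF assms(1,2)], of n t] by force
  thus ?thesis by (simp add: supp_def op_minus_def)
qed

lemma is_op_op_minus: "is_op n A \<Longrightarrow> is_op n B \<Longrightarrow> is_op n (op_minus A B)"
  using supp_op_minus[of A B] by (auto simp: is_op_def intro: finite_subset)

lemma ord_op_minus_commute: "ord n (op_minus A B) = ord n (op_minus B (A :: _ \<Rightarrow> 'k::ab_group_add))"
proof -
  have "supp (op_minus A B) = supp (op_minus B A)" by (auto simp: supp_def op_minus_def)
  thus ?thesis by (simp add: ord_def)
qed

section \<open>Uniqueness of extensions\<close>

lemma supp_op_minus_degree_less:
  fixes F F' F'' :: "(nat \<Rightarrow> nat) \<Rightarrow> 'k::ab_group_add"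
  assumes "finite (supp F)" "finite (supp F')" "finite (supp F'')"
    and "ord n (op_minus F F') < ereal (real_of_int x)" "ord n (op_minus F F'') < ereal (real_of_int x)"
  shows "\<forall>J\<in>supp (op_minus F'' F'). int (mdeg n J) < x"
proof -
  have "supp (op_minus F'' F') \<subseteq> supp (op_minus F F') \<union> supp (op_minus F F'')"
    by (auto simp: supp_def op_minus_def)
  thus ?thesis using assms ord_less_iff finite_supp_op_minus by blast
qed

lemma ord_less_if_hom_comp_eq_0:
  assumes "finite (supp B)" "\<forall>J\<in>supp B. int (mdeg n J) \<le> e" "hom_comp n e B = (\<lambda>_. 0)"
  shows "ord n B < ereal (real_of_int e)"
proof -
  have "int (mdeg n J) \<noteq> e" if "J \<in> supp B" for J
    using that assms(3) by (auto simp: supp_def hom_comp_def dest: fun_cong[of _ _ J])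
  thus ?thesis using assms(1,2) ord_less_iff by fastforce
qed

lemma perturbed_composition_top_degree:
  fixes F1 F2 B1 B2 S1 S2 :: "(nat \<Rightarrow> nat) \<Rightarrow> 'k::field"
  assumes \<delta>: "commuting_derivations n \<delta>"
    and fin: "finite (supp F1)" "finite (supp F2)" "finite (supp B1)" "finite (supp B2)"
    and F1: "\<forall>J\<in>supp F1. mdeg n J \<le> d1" "hom_comp n d1 F1 = S1" "homogeneous n S1 d1"
    and F2: "\<forall>J\<in>supp F2. mdeg n J \<le> d2" "hom_comp n d2 F2 = S2" "homogeneous n S2 d2"
    and B: "\<forall>J\<in>supp B1. int (mdeg n J) \<le> e1" "\<forall>J\<in>supp B2. int (mdeg n J) \<le> e2"
    and T: "e1 + int d2 = T" "int d1 + e2 = T" "e1 + e2 < T"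
    and agree: "\<And>P. T \<le> int (mdeg n P) \<Longrightarrow>
      op_comp \<delta> n (\<lambda>J. F1 J + B1 J) (\<lambda>J. F2 J + B2 J) P = op_comp \<delta> n F1 F2 P"
  shows "pmult (hom_comp n e1 B1) S2 P + pmult S1 (hom_comp n e2 B2) P = 0"
proof (cases "T \<le> int (mdeg n P)")
  case True
  have F1': "\<forall>J\<in>supp F1. int (mdeg n J) \<le> int d1" and F2': "\<forall>J\<in>supp F2. int (mdeg n J) \<le> int d2"
    using F1(1) F2(1) by auto
  have B2': "\<forall>J\<in>supp B2. int (mdeg n J) \<le> T - e1" using B(2) T(3) by fastforce
  have "op_comp \<delta> n (\<lambda>J. F1 J + B1 J) (\<lambda>J. F2 J + B2 J) P =
      op_comp \<delta> n F1 F2 P + op_comp \<delta> n F1 B2 P + op_comp \<delta> n B1 F2 P + op_comp \<delta> n B1 B2 P"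
    by (simp add: op_comp_add_left op_comp_add_right[OF \<delta>] fin)
  moreover have "op_comp \<delta> n B1 F2 P = pmult (hom_comp n e1 B1) S2 P"
    using op_comp_top_degree[OF fin(3,2) B(1) F2'] T(1) True F2(2) by simp
  moreover have "op_comp \<delta> n F1 B2 P = pmult S1 (hom_comp n e2 B2) P"
    using op_comp_top_degree[OF fin(1,4) F1' B(2)] T(2) True F1(2) by simp
  moreover have "op_comp \<delta> n B1 B2 P = pmult (hom_comp n e1 B1) (hom_comp n (T - e1) B2) P"
    using op_comp_top_degree[OF fin(3,4) B(1) B2'] True by simp
  moreover have "hom_comp n (T - e1) B2 = (\<lambda>_. 0)" using hom_comp_eq_0[OF B(2)] T(3) by simp
  ultimately show ?thesis
    using agree[OF True] by (simp add: pmult_commute[of _ "\<lambda>_. 0"] pmult_zero_left add.commute)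
next
  case False
  thus ?thesis using pmult_hom_comp_eq_0[OF F2(3)] pmult_hom_comp_eq_0[OF F1(3)] T(1,2)
    by (simp add: pmult_commute[of S1])
qed

lemma cofactors_vanish:
  fixes S0 S1 S2 b1 b2 :: "(nat \<Rightarrow> nat) \<Rightarrow> 'k::field"
  assumes gcd: "is_gcd n S0 S1 S2"
    and S: "is_mpoly n S1" "is_mpoly n S2" "S1 \<noteq> (\<lambda>_. 0)" "S2 \<noteq> (\<lambda>_. 0)"
    and b: "is_mpoly n b1" "is_mpoly n b2" "b1 \<noteq> (\<lambda>_. 0) \<Longrightarrow> pdeg n S0 + pdeg n b1 < pdeg n S1"
    and eq: "\<And>P. pmult b1 S2 P + pmult S1 b2 P = 0"
  shows "b1 = (\<lambda>_. 0)" "b2 = (\<lambda>_. 0)"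
proof -
  show b1: "b1 = (\<lambda>_. 0)" using pdeg_le_gcd_add[OF gcd S(1,2) b(1,2) S(3,4) _ eq] b(3) by fastforce
  have "pmult S1 b2 = (\<lambda>_. 0)" using eq by (simp add: b1 pmult_zero_left fun_eq_iff)
  hence "mpoly_of S1 * mpoly_of b2 = 0" by (simp add: mpoly_of_pmult[OF S(1) b(2), symmetric] mpoly_of_zero)
  thus "b2 = (\<lambda>_. 0)" using S(1,3) b(2) by (simp add: mpoly_of_eq_0_iff)
qed

theorem mainTheorem2:
  fixes \<delta> :: "nat \<Rightarrow> 'k::field \<Rightarrow> 'k" and n d d0 d1 d2 :: nat and t :: int
    and L F1 F2 F1' F2' F1'' F2'' S0 S1 S2 :: "(nat \<Rightarrow> nat) \<Rightarrow> 'k"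
  assumes "commuting_derivations n \<delta>"
    and "is_op n L" and "ord n L = ereal (real d)"
    and "is_mpoly n S1" and "is_mpoly n S2"
    and "homogeneous n S1 d1" and "homogeneous n S2 d2"
    and "Sym n L = pmult S1 S2"
    and "is_gcd n S0 S1 S2" and "pdeg n S0 = d0"
    and "1 \<le> t" and "t \<le> int d - int d0"
    and "partial_factorization \<delta> n L t S1 S2 F1 F2"
    and "partial_factorization \<delta> n L (t - 1) S1 S2 F1' F2'"
    and "is_extension n d d1 d2 t F1 F2 (t - 1) F1' F2'"
    and "partial_factorization \<delta> n L (t - 1) S1 S2 F1'' F2''"
    and "is_extension n d d1 d2 t F1 F2 (t - 1) F1'' F2''"
  shows "ord n (op_minus F1' F1'') < ereal (real_of_int ((t - 1) - (int d - int d1))) \<and>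
         ord n (op_minus F2' F2'') < ereal (real_of_int ((t - 1) - (int d - int d2)))"
proof -
  have ops: "is_op n F1" "is_op n F2" "is_op n F1'" "is_op n F2'" "is_op n F1''" "is_op n F2''"
    and syms: "Sym n F1' = S1" "Sym n F2' = S2"
    and ord': "ord n (op_minus L (op_comp \<delta> n F1' F2')) < ereal (real_of_int (t - 1))"
    and ord'': "ord n (op_minus L (op_comp \<delta> n F1'' F2'')) < ereal (real_of_int (t - 1))"
    using assms(13,14,16) by (simp_all add: partial_factorization_def)
  hence fin: "finite (supp L)" "finite (supp F1)" "finite (supp F2)" "finite (supp F1')"
      "finite (supp F2')" "finite (supp F1'')" "finite (supp F2'')"
    using assms(2) by (simp_all add: is_op_def)
  have S: "S1 \<noteq> (\<lambda>_. 0)" "S2 \<noteq> (\<lambda>_. 0)" "d = d1 + d2" by (rule symbol_factors[OF assms(2,3,8,6,7)])+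
  note top1 = symbol_top_degree[OF ops(3) syms(1) S(1) assms(6)]
  note top2 = symbol_top_degree[OF ops(4) syms(2) S(2) assms(7)]
  define e1 e2 B1 B2 where "e1 = t - 1 - int d2" and "e2 = t - 1 - int d1"
    and "B1 = op_minus F1'' F1'" and "B2 = op_minus F2'' F2'"
  have B: "\<forall>J\<in>supp B1. int (mdeg n J) \<le> e1" "\<forall>J\<in>supp B2. int (mdeg n J) \<le> e2"
    using supp_op_minus_degree_less[of F1 F1' F1'' n "e1 + 1"]
      supp_op_minus_degree_less[of F2 F2' F2'' n "e2 + 1"] assms(15,17) fin S(3)
    by (fastforce simp: is_extension_def e1_def e2_def B1_def B2_def)+
  have opB: "is_op n B1" "is_op n B2" using ops by (simp_all add: B1_def B2_def is_op_op_minus)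
  hence finB: "finite (supp B1)" "finite (supp B2)" by (simp_all add: is_op_def)
  have "op_comp \<delta> n (\<lambda>J. F1' J + B1 J) (\<lambda>J. F2' J + B2 J) P = op_comp \<delta> n F1' F2' P"
    if "t - 1 \<le> int (mdeg n P)" for P
    using eq_if_ord_op_minus_less[OF fin(1) _ ord' that] eq_if_ord_op_minus_less[OF fin(1) _ ord'' that]
      finite_supp_op_comp[OF ops(3,4)] finite_supp_op_comp[OF ops(5,6)]
    by (simp add: B1_def B2_def op_minus_def)
  hence cancel: "pmult (hom_comp n e1 B1) S2 P + pmult S1 (hom_comp n e2 B2) P = 0" for P
    using perturbed_composition_top_degree[OF assms(1) fin(4,5) finB top1 assms(6) top2 assms(7) B]
      S(3) assms(12) by (simp add: e1_def e2_def)
  have deg: "pdeg n S0 + pdeg n (hom_comp n e1 B1) < pdeg n S1" if "hom_comp n e1 B1 \<noteq> (\<lambda>_. 0)"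
    using pdeg_hom_comp[OF that] pdeg_homogeneous[OF assms(6) S(1)] assms(10,12) S(3) by (simp add: e1_def)
  have "hom_comp n e1 B1 = (\<lambda>_. 0)" "hom_comp n e2 B2 = (\<lambda>_. 0)"
    using cofactors_vanish[OF assms(9,4,5) S(1,2) is_mpoly_hom_comp[OF opB(1)] is_mpoly_hom_comp[OF opB(2)]
      _ cancel] deg by blast+
  thus ?thesis
    using ord_less_if_hom_comp_eq_0[OF finB(1) B(1)] ord_less_if_hom_comp_eq_0[OF finB(2) B(2)]
    by (simp add: e1_def e2_def B1_def B2_def S(3) ord_op_minus_commute)
qed

end
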